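(* Consider the $K$-class system with class-wise distributions described in the context, with constants $\bar M_R,\bar L_R,\bar L_P,\bar L_Q>0$ and $\gamma\in[0,1)$. Let $\mathbf x_0^{\mathbf N}$ be initial states and $\bar{\boldsymbol\mu}_0\in\mathcal P^K(\mathcal X)$ their class-wise empirical distribution, let $\theta_k=N_k/N_{\mathrm{pop}}$ and $\boldsymbol\theta_M^{-1}=\max_{k\in[K]}\theta_k^{-1}$, and define $\bar C_R(\boldsymbol\theta)=\bar M_R+\bar L_R\boldsymbol\theta_M^{-1}$, $\bar C_P(\boldsymbol\theta)=2+\bar L_P\boldsymbol\theta_M^{-1}$, $\bar S_R(\boldsymbol\theta)=\bar M_R(1+\bar L_Q\boldsymbol\theta_M^{-1})+\bar L_R\boldsymbol\theta_M^{-1}(2+\bar L_Q\boldsymbol\theta_M^{-1})$, $\bar S_P(\boldsymbol\theta)=(1+\bar L_Q\boldsymbol\theta_M^{-1})+\bar L_P\boldsymbol\theta_M^{-1}(2+\bar L_Q\boldsymbol\theta_M^{-1})$. If $\gamma\bar S_P(\boldsymbol\theta)<1$, then for every $\bar{\boldsymbol\pi}\in\bar\Pi$, $$\Big|\bar v^{\mathbf N}(\mathbf x_0^{\mathbf N},\bar{\boldsymbol\pi})-\bar v^{\mathrm{MF}}(\bar{\boldsymbol\mu}_0,\bar{\boldsymbol\pi})\Big|\le\frac{\bar C_R(\boldsymbol\theta)}{1-\gamma}\sqrt{|\mathcal U|}\frac1{N_{\mathrm{pop}}}\Big(\sum_k\sqrt{N_k}\Big)+\bar C_P(\boldsymbol\theta)\Big(\frac{\bar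 S_R(\boldsymbol\theta)}{\bar S_P(\boldsymbol\theta)-1}\Big)\sqrt{|\mathcal X||\mathcal U|}\frac1{N_{\mathrm{pop}}}\Big(\sum_k\sqrt{N_k}\Big)\Big[\frac1{1-\gamma\bar S_P(\boldsymbol\theta)}-\frac1{1-\gamma}\Big].$$
   Context: Fix integers $K\ge1$, $N_1,\dots,N_K\ge1$, $[K]=\{1,\dots,K\}$, $N_{\mathrm{pop}}=\sum_kN_k$, finite sets $\mathcal X,\mathcal U$. $\mathcal P(A)$ denotes probability distributions on $A$; $\mathcal P^K(A)=\mathcal P(A)^K$ with elements written $\bar{\boldsymbol\mu}(\cdot,k)$ and $|\bar{\boldsymbol\mu}|_1=\sum_k\sum_a|\bar{\boldsymbol\mu}(a,k)|$. Agent $j\in[N_k]$ of class $k$ has state $x_{j,k}^t$, action $u_{j,k}^t$; $\bar{\boldsymbol\mu}_t^{\mathbf N}(x,k)=\frac1{N_k}\sum_{j}\mathbf 1(x_{j,k}^t=x)$, $\bar{\boldsymbol\nu}_t^{\mathbf N}(u,k)=\frac1{N_k}\sum_j\mathbf 1(u_{j,k}^t=u)$. For each $k$: $\bar r_k:\mathcal X\times\mathcal U\times\mathcal P^K(\mathcal X)\times\mathcal P^K(\mathcal U)\to\mathbb R$, $\bar P_k:\mathcal X\times\mathcal U\times\mathcal P^K(\mathcal X)\times\mathcal P^K(\mathcal U)\to\mathcal P(\mathcal X)$ with $|\bar r_k|\le\bar M_R$, $|\bar r_k(x,u,\bar{\boldsymbol\mu}_1,\bar{\boldsymbol\nu}_1)-\bar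 r_k(x,u,\bar{\boldsymbol\mu}_2,\bar{\boldsymbol\nu}_2)|\le\bar L_R(|\bar{\boldsymbol\mu}_1-\bar{\boldsymbol\mu}_2|_1+|\bar{\boldsymbol\nu}_1-\bar{\boldsymbol\nu}_2|_1)$, $|\bar P_k(x,u,\bar{\boldsymbol\mu}_1,\bar{\boldsymbol\nu}_1)-\bar P_k(x,u,\bar{\boldsymbol\mu}_2,\bar{\boldsymbol\nu}_2)|_1\le\bar L_P(|\bar{\boldsymbol\mu}_1-\bar{\boldsymbol\mu}_2|_1+|\bar{\boldsymbol\nu}_1-\bar{\boldsymbol\nu}_2|_1)$. A policy $\bar{\boldsymbol\pi}=\{\bar{\boldsymbol\pi}_t\}_{t\ge0}$, $\bar{\boldsymbol\pi}_t=(\bar\pi_k^t)_k$, has decision rules $\bar\pi_k^t:\mathcal X\times\mathcal P^K(\mathcal X)\to\mathcal P(\mathcal U)$; $\bar\Pi$ is the set of policies with $|\bar\pi_k^t(x,\bar{\boldsymbol\mu}_1)-\bar\pi_k^t(x,\bar{\boldsymbol\mu}_2)|_1\le\bar L_Q|\bar{\boldsymbol\mu}_1-\bar{\boldsymbol\mu}_2|_1$. Dynamics: conditioned on all states, actions independent with $u_{j,k}^t\sim\bar\pi_k^t(x_{j,k}^t,\bar{\boldsymbol\mu}_t^{\mathbf N})$; conditioned on states and actions, next states independent with $x_{j,k}^{t+1}\sim\bar P_k(x_{j,k}^t,u_{j,k}^t,\bar{\boldsymbol\mu}_t^{\mathbf N},\bar{\boldsymbol\nu}_t^{\mathbf N})$.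 $\bar v^{\mathbf N}(\mathbf x_0^{\mathbf N},\bar{\boldsymbol\pi})=\frac1{N_{\mathrm{pop}}}\sum_k\sum_j\mathbb E[\sum_{t\ge0}\gamma^t\bar r_k(x_{j,k}^t,u_{j,k}^t,\bar{\boldsymbol\mu}_t^{\mathbf N},\bar{\boldsymbol\nu}_t^{\mathbf N})]$. Mean-field: $\bar\nu^{\mathrm{MF}}(\bar{\boldsymbol\mu},\bar{\boldsymbol\pi})(u,k)=\sum_x\bar\pi_k(x,\bar{\boldsymbol\mu})(u)\bar{\boldsymbol\mu}(x,k)$, $\bar P^{\mathrm{MF}}(\bar{\boldsymbol\mu},\bar{\boldsymbol\pi})(x',k)=\sum_{x,u}\bar{\boldsymbol\mu}(x,k)\bar\pi_k(x,\bar{\boldsymbol\mu})(u)\bar P_k(x,u,\bar{\boldsymbol\mu},\bar\nu^{\mathrm{MF}}(\bar{\boldsymbol\mu},\bar{\boldsymbol\pi}))(x')$, $\bar r_k^{\mathrm{MF}}(\bar{\boldsymbol\mu},\bar{\boldsymbol\pi})=\sum_{x,u}\bar{\boldsymbol\mu}(x,k)\bar\pi_k(x,\bar{\boldsymbol\mu})(u)\bar r_k(x,u,\bar{\boldsymbol\mu},\bar\nu^{\mathrm{MF}}(\bar{\boldsymbol\mu},\bar{\boldsymbol\pi}))$; with $\bar{\boldsymbol\mu}_{t+1}=\bar P^{\mathrm{MF}}(\bar{\boldsymbol\mu}_t,\bar{\boldsymbol\pi}_t)$, $\bar v^{\mathrm{MF}}(\bar{\boldsymbol\mu}_0,\bar{\boldsymbol\pi})=\sum_k\theta_k\sum_{t\ge0}\gamma^t\bar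 r_k^{\mathrm{MF}}(\bar{\boldsymbol\mu}_t,\bar{\boldsymbol\pi}_t)$. *)

theory Defs
  imports "HOL-Probability.Probability"
begin

definition PK :: "nat \<Rightarrow> ('a::finite \<Rightarrow> nat \<Rightarrow> real) set" where
  "PK K = {\<mu>. (\<forall>x k. K \<le> k \<longrightarrow> \<mu> x k = 0) \<and>
              (\<forall>k<K. (\<forall>x. 0 \<le> \<mu> x k) \<and> (\<Sum>x\<in>UNIV. \<mu> x k) = 1)}"

definition l1K :: "nat \<Rightarrow> ('a::finite \<Rightarrow> nat \<Rightarrow> real) \<Rightarrow> ('a \<Rightarrow> nat \<Rightarrow> real) \<Rightarrow> real" where
  "l1K K \<mu>1 \<mu>2 = (\<Sum>k<K. \<Sum>x\<in>UNIV. \<bar>\<mu>1 x k - \<mu>2 x k\<bar>)"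

definition l1pmf :: "'a::finite pmf \<Rightarrow> 'a pmf \<Rightarrow> real" where
  "l1pmf p q = (\<Sum>x\<in>UNIV. \<bar>pmf p x - pmf q x\<bar>)"

definition Npop :: "nat \<Rightarrow> (nat \<Rightarrow> nat) \<Rightarrow> nat" where
  "Npop K N = (\<Sum>k<K. N k)"

definition agents :: "nat \<Rightarrow> (nat \<Rightarrow> nat) \<Rightarrow> (nat \<times> nat) set" where
  "agents K N = {(k, j). k < K \<and> j < N k}"

definition emp :: "nat \<Rightarrow> (nat \<Rightarrow> nat) \<Rightarrow> (nat \<times> nat \<Rightarrow> 'a) \<Rightarrow> 'a \<Rightarrow> nat \<Rightarrow> real" where
  "emp K N s x k = (if k < K then real (card {j. j < N k \<and> s (k, j) = x}) / real (N k) else 0)"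

definition action_pmf ::
  "nat \<Rightarrow> (nat \<Rightarrow> nat) \<Rightarrow> (nat \<Rightarrow> nat \<Rightarrow> 'x \<Rightarrow> ('x \<Rightarrow> nat \<Rightarrow> real) \<Rightarrow> 'u pmf)
   \<Rightarrow> nat \<Rightarrow> (nat \<times> nat \<Rightarrow> 'x) \<Rightarrow> (nat \<times> nat \<Rightarrow> 'u) pmf" where
  "action_pmf K N pol t s =
     Pi_pmf (agents K N) undefined (\<lambda>(k, j). pol t k (s (k, j)) (emp K N s))"

definition next_pmf ::
  "nat \<Rightarrow> (nat \<Rightarrow> nat) \<Rightarrow> (nat \<Rightarrow> 'x \<Rightarrow> 'u \<Rightarrow> ('x \<Rightarrow> nat \<Rightarrow> real) \<Rightarrow> ('u \<Rightarrow> nat \<Rightarrow> real) \<Rightarrow> 'x pmf)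
   \<Rightarrow> (nat \<times> nat \<Rightarrow> 'x) \<Rightarrow> (nat \<times> nat \<Rightarrow> 'u) \<Rightarrow> (nat \<times> nat \<Rightarrow> 'x) pmf" where
  "next_pmf K N P s a =
     Pi_pmf (agents K N) undefined (\<lambda>(k, j). P k (s (k, j)) (a (k, j)) (emp K N s) (emp K N a))"

fun state_dist ::
  "nat \<Rightarrow> (nat \<Rightarrow> nat) \<Rightarrow> (nat \<Rightarrow> nat \<Rightarrow> 'x \<Rightarrow> ('x \<Rightarrow> nat \<Rightarrow> real) \<Rightarrow> 'u pmf)
   \<Rightarrow> (nat \<Rightarrow> 'x \<Rightarrow> 'u \<Rightarrow> ('x \<Rightarrow> nat \<Rightarrow> real) \<Rightarrow> ('u \<Rightarrow> nat \<Rightarrow> real) \<Rightarrow> 'x pmf)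
   \<Rightarrow> (nat \<times> nat \<Rightarrow> 'x) \<Rightarrow> nat \<Rightarrow> (nat \<times> nat \<Rightarrow> 'x) pmf" where
  "state_dist K N pol P x0 0 = return_pmf x0"
| "state_dist K N pol P x0 (Suc t) =
     bind_pmf (state_dist K N pol P x0 t)
       (\<lambda>s. bind_pmf (action_pmf K N pol t s) (\<lambda>a. next_pmf K N P s a))"

definition sa_dist where
  "sa_dist K N pol P x0 t =
     bind_pmf (state_dist K N pol P x0 t) (\<lambda>s. map_pmf (\<lambda>a. (s, a)) (action_pmf K N pol t s))"

definition stage_reward ::
  "nat \<Rightarrow> (nat \<Rightarrow> nat) \<Rightarrow> (nat \<Rightarrow> 'x \<Rightarrow> 'u \<Rightarrow> ('x \<Rightarrow> nat \<Rightarrow> real) \<Rightarrow> ('u \<Rightarrow> nat \<Rightarrow> real) \<Rightarrow> real)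
   \<Rightarrow> (nat \<times> nat \<Rightarrow> 'x) \<Rightarrow> (nat \<times> nat \<Rightarrow> 'u) \<Rightarrow> real" where
  "stage_reward K N r s a =
     (\<Sum>k<K. \<Sum>j<N k. r k (s (k, j)) (a (k, j)) (emp K N s) (emp K N a))"

text \<open>N-agent value: (1/N_pop) sum_k sum_j E[sum_t gamma^t r_k(...)], with the expectation
  of the discounted sum written as the sum of discounted expected stage rewards.\<close>
definition vN where
  "vN K N \<gamma> pol P r x0 =
     (1 / real (Npop K N)) *
     (\<Sum>t. \<gamma> ^ t * measure_pmf.expectation (sa_dist K N pol P x0 t)
                      (\<lambda>(s, a). stage_reward K N r s a))"

definition nuMF :: "(nat \<Rightarrow> 'x::finite \<Rightarrow> ('x \<Rightarrow> nat \<Rightarrow> real) \<Rightarrow> 'u pmf)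
   \<Rightarrow> ('x \<Rightarrow> nat \<Rightarrow> real) \<Rightarrow> 'u \<Rightarrow> nat \<Rightarrow> real" where
  "nuMF pt \<mu> u k = (\<Sum>x\<in>UNIV. pmf (pt k x \<mu>) u * \<mu> x k)"

definition PMF :: "(nat \<Rightarrow> 'x \<Rightarrow> 'u \<Rightarrow> ('x \<Rightarrow> nat \<Rightarrow> real) \<Rightarrow> ('u \<Rightarrow> nat \<Rightarrow> real) \<Rightarrow> 'x pmf)
   \<Rightarrow> (nat \<Rightarrow> 'x::finite \<Rightarrow> ('x \<Rightarrow> nat \<Rightarrow> real) \<Rightarrow> 'u::finite pmf)
   \<Rightarrow> ('x \<Rightarrow> nat \<Rightarrow> real) \<Rightarrow> 'x \<Rightarrow> nat \<Rightarrow> real" where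
  "PMF P pt \<mu> x' k =
     (\<Sum>x\<in>UNIV. \<Sum>u\<in>UNIV. \<mu> x k * pmf (pt k x \<mu>) u * pmf (P k x u \<mu> (nuMF pt \<mu>)) x')"

definition rMF :: "(nat \<Rightarrow> 'x \<Rightarrow> 'u \<Rightarrow> ('x \<Rightarrow> nat \<Rightarrow> real) \<Rightarrow> ('u \<Rightarrow> nat \<Rightarrow> real) \<Rightarrow> real)
   \<Rightarrow> (nat \<Rightarrow> 'x::finite \<Rightarrow> ('x \<Rightarrow> nat \<Rightarrow> real) \<Rightarrow> 'u::finite pmf)
   \<Rightarrow> ('x \<Rightarrow> nat \<Rightarrow> real) \<Rightarrow> nat \<Rightarrow> real" where
  "rMF r pt \<mu> k =
     (\<Sum>x\<in>UNIV. \<Sum>u\<in>UNIV. \<mu> x k * pmf (pt k x \<mu>) u * r k x u \<mu> (nuMF pt \<mu>))"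

fun mu_traj :: "(nat \<Rightarrow> 'x \<Rightarrow> 'u \<Rightarrow> ('x \<Rightarrow> nat \<Rightarrow> real) \<Rightarrow> ('u \<Rightarrow> nat \<Rightarrow> real) \<Rightarrow> 'x pmf)
   \<Rightarrow> (nat \<Rightarrow> nat \<Rightarrow> 'x::finite \<Rightarrow> ('x \<Rightarrow> nat \<Rightarrow> real) \<Rightarrow> 'u::finite pmf)
   \<Rightarrow> ('x \<Rightarrow> nat \<Rightarrow> real) \<Rightarrow> nat \<Rightarrow> ('x \<Rightarrow> nat \<Rightarrow> real)" where
  "mu_traj P pol \<mu>0 0 = \<mu>0"
| "mu_traj P pol \<mu>0 (Suc t) = PMF P (pol t) (mu_traj P pol \<mu>0 t)"

definition vMF where
  "vMF K N \<gamma> P r pol \<mu>0 =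
     (\<Sum>k<K. (real (N k) / real (Npop K N)) *
        (\<Sum>t. \<gamma> ^ t * rMF r (pol t) (mu_traj P pol \<mu>0 t) k))"

end

theory Submission
  imports Defs
begin

text \<open>
  Conditionally on the current state profile, the agents act and move independently, so every
  class-wise empirical distribution of actions or of next states deviates from its conditional mean
  by \<open>sqrt (card / N k)\<close> in expectation: variances of independent summands add up. Together with the
  Lipschitz continuity of the mean-field maps this gives, for the population-weighted expected distance
  \<open>d t\<close> between the empirical state distribution and the mean-field flow, a recursion
  \<open>d (t + 1) \<le> E + S\<^sub>P * d t\<close> with \<open>E\<close> proportional to \<open>(\<Sum>k. sqrt (N k)) / N\<^sub>p\<^sub>o\<^sub>p\<close>. The reward gap
  at time \<open>t\<close> is at most \<open>C\<^sub>R sqrt |U|\<close> times the same rate plus \<open>S\<^sub>R * d t\<close>, and summing these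
  geometric bounds against \<open>\<gamma>\<^sup>t\<close> gives the theorem.
\<close>

section \<open>Expectations under products of pmfs\<close>

lemma integrable_pmf_bounded:
  fixes f :: "'a \<Rightarrow> real"
  assumes "\<And>y. \<bar>f y\<bar> \<le> B"
  shows "integrable (measure_pmf M) f"
  using assms by (intro measure_pmf.integrable_const_bound[where B=B]) auto

lemma integrable_pmf_bounded_square:
  fixes f :: "'a \<Rightarrow> real"
  assumes "\<And>y. \<bar>f y\<bar> \<le> B"
  shows "integrable (measure_pmf M) (\<lambda>y. (f y)\<^sup>2)"
proof (rule integrable_pmf_bounded)
  show "\<bar>(f y)\<^sup>2\<bar> \<le> B\<^sup>2" for y
    using power_mono[OF assms abs_ge_zero, of y 2] by (simp add: power_abs)
qed

lemma abs_sum_le_card_mult: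
  fixes f :: "'a \<Rightarrow> real"
  assumes "\<And>j. j \<in> A \<Longrightarrow> \<bar>f j\<bar> \<le> B"
  shows "\<bar>\<Sum>j\<in>A. f j\<bar> \<le> real (card A) * B"
  by (rule order_trans[OF sum_abs sum_bounded_above]) (rule assms)

lemma expectation_bind_pmf_bounded:
  fixes f :: "'b \<Rightarrow> real"
  assumes "\<And>y. \<bar>f y\<bar> \<le> B"
  shows "measure_pmf.expectation (bind_pmf M N) f
       = measure_pmf.expectation M (\<lambda>x. measure_pmf.expectation (N x) f)"
  unfolding measure_pmf_bind
  by (rule integral_bind[where K="count_space UNIV" and B=B and B'=1])
     (use assms in \<open>auto simp: measure_pmf.emeasure_space_1 measure_pmf_in_subprob_algebra
                         intro: measure_pmf.finite_measure_axioms\<close>)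

lemma expectation_pair_pmf_bounded:
  fixes f :: "'a \<times> 'b \<Rightarrow> real"
  assumes "\<And>z. \<bar>f z\<bar> \<le> B"
  shows "measure_pmf.expectation (pair_pmf M N) f
       = measure_pmf.expectation M (\<lambda>x. measure_pmf.expectation N (\<lambda>y. f (x, y)))"
  unfolding pair_pmf_def using assms by (simp add: expectation_bind_pmf_bounded[where B=B])

lemma expectation_abs_le_sqrt_expectation_square:
  fixes Z :: "'a \<Rightarrow> real"
  assumes "\<And>y. \<bar>Z y\<bar> \<le> B"
  shows "measure_pmf.expectation M (\<lambda>y. \<bar>Z y\<bar>) \<le> sqrt (measure_pmf.expectation M (\<lambda>y. (Z y)\<^sup>2))"
proof (rule real_le_rsqrt)
  have "integrable M (\<lambda>y. \<bar>Z y\<bar>)"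
    using assms by (intro integrable_pmf_bounded[where B=B]) simp
  moreover have "integrable M (\<lambda>y. \<bar>Z y\<bar>\<^sup>2)"
    using assms by (intro integrable_pmf_bounded_square[where B=B]) simp
  ultimately show "(measure_pmf.expectation M (\<lambda>y. \<bar>Z y\<bar>))\<^sup>2 \<le> measure_pmf.expectation M (\<lambda>y. (Z y)\<^sup>2)"
    using measure_pmf.variance_eq[of M "\<lambda>y. \<bar>Z y\<bar>"] measure_pmf.variance_positive[of M "\<lambda>y. \<bar>Z y\<bar>"]
    by simp
qed

lemma expectation_centered_square_le_mean:
  fixes f :: "'a \<Rightarrow> real"
  assumes "\<And>y. 0 \<le> f y" "\<And>y. f y \<le> 1"
  shows "measure_pmf.expectation M (\<lambda>y. (f y - measure_pmf.expectation M f)\<^sup>2) \<le> measure_pmf.expectation M f"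
proof -
  have int: "integrable M f" "integrable M (\<lambda>y. (f y)\<^sup>2)"
    using assms by (auto intro!: integrable_pmf_bounded[where B=1] simp: abs_le_iff power_le_one)
  have "measure_pmf.expectation M (\<lambda>y. (f y - measure_pmf.expectation M f)\<^sup>2)
      \<le> measure_pmf.expectation M (\<lambda>y. (f y)\<^sup>2)"
    using measure_pmf.variance_eq[OF int] by simp
  also have "\<dots> \<le> measure_pmf.expectation M f"
    using assms int by (intro integral_mono) (auto simp: power2_eq_square mult_left_le)
  finally show ?thesis .
qed

lemma expectation_Pi_pmf_component:
  fixes g :: "'b \<Rightarrow> real"
  assumes "finite A" "j \<in> A"
  shows "measure_pmf.expectation (Pi_pmf A d p) (\<lambda>\<omega>. g (\<omega> j)) = measure_pmf.expectation (p j) g"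
proof -
  have "measure_pmf.expectation (Pi_pmf A d p) (\<lambda>\<omega>. g (\<omega> j))
      = measure_pmf.expectation (map_pmf (\<lambda>\<omega>. \<omega> j) (Pi_pmf A d p)) g"
    by simp
  then show ?thesis
    using Pi_pmf_component[OF assms(1), of j d p] assms(2) by simp
qed

lemma expectation_Pi_pmf_sum:
  fixes g :: "'i \<Rightarrow> 'b \<Rightarrow> real"
  assumes "finite A" "\<And>j y. \<bar>g j y\<bar> \<le> B"
  shows "measure_pmf.expectation (Pi_pmf A d p) (\<lambda>\<omega>. \<Sum>j\<in>A. g j (\<omega> j))
       = (\<Sum>j\<in>A. measure_pmf.expectation (p j) (g j))"
proof -
  have "measure_pmf.expectation (Pi_pmf A d p) (\<lambda>\<omega>. \<Sum>j\<in>A. g j (\<omega> j))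
      = (\<Sum>j\<in>A. measure_pmf.expectation (Pi_pmf A d p) (\<lambda>\<omega>. g j (\<omega> j)))"
    by (rule Bochner_Integration.integral_sum) (rule integrable_pmf_bounded, rule assms(2))
  then show ?thesis
    using assms(1) by (simp add: expectation_Pi_pmf_component)
qed

lemma expectation_Pi_pmf_restrict:
  fixes F :: "('i \<Rightarrow> 'b) \<Rightarrow> real"
  assumes "finite A" "B \<subseteq> A" and depends_on_B: "\<And>\<omega> \<omega>'. (\<And>j. j \<in> B \<Longrightarrow> \<omega> j = \<omega>' j) \<Longrightarrow> F \<omega> = F \<omega>'"
  shows "measure_pmf.expectation (Pi_pmf A d p) F = measure_pmf.expectation (Pi_pmf B d p) F"
proof -
  have "measure_pmf.expectation (Pi_pmf B d p) F
      = measure_pmf.expectation (Pi_pmf A d p) (\<lambda>\<omega>. F (\<lambda>x. if x \<in> B then \<omega> x else d))"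
    by (simp add: Pi_pmf_subset[OF assms(1,2)])
  also have "\<dots> = measure_pmf.expectation (Pi_pmf A d p) F"
    by (intro Bochner_Integration.integral_cong refl depends_on_B[symmetric]) simp
  finally show ?thesis ..
qed

lemma expectation_add_centered_square:
  fixes S :: "'a \<Rightarrow> real"
  assumes "\<And>\<omega>. \<bar>S \<omega>\<bar> \<le> B" "measure_pmf.expectation M S = 0"
  shows "measure_pmf.expectation M (\<lambda>\<omega>. (a + S \<omega>)\<^sup>2) = a\<^sup>2 + measure_pmf.expectation M (\<lambda>\<omega>. (S \<omega>)\<^sup>2)"
proof -
  have "(\<lambda>\<omega>. (a + S \<omega>)\<^sup>2) = (\<lambda>\<omega>. a\<^sup>2 + (2 * a) * S \<omega> + (S \<omega>)\<^sup>2)"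
    by (simp add: power2_eq_square algebra_simps)
  moreover have "integrable M S" "integrable M (\<lambda>\<omega>. (S \<omega>)\<^sup>2)"
    using assms(1) by (auto intro: integrable_pmf_bounded integrable_pmf_bounded_square)
  ultimately show ?thesis
    using assms(2) by simp
qed

lemma expectation_Pi_pmf_sum_square:
  fixes g :: "'i \<Rightarrow> 'b \<Rightarrow> real"
  assumes "finite A" and bound: "\<And>j y. \<bar>g j y\<bar> \<le> B"
    and centered: "\<And>j. j \<in> A \<Longrightarrow> measure_pmf.expectation (p j) (g j) = 0"
  shows "measure_pmf.expectation (Pi_pmf A d p) (\<lambda>\<omega>. (\<Sum>j\<in>A. g j (\<omega> j))\<^sup>2)
       = (\<Sum>j\<in>A. measure_pmf.expectation (p j) (\<lambda>y. (g j y)\<^sup>2))"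
  using assms(1) centered
proof (induction A rule: finite_induct)
  case (insert i A)
  define S where "S \<omega> = (\<Sum>j\<in>A. g j (\<omega> j))" for \<omega>
  have S_bound: "\<bar>S \<omega>\<bar> \<le> real (card A) * B" for \<omega>
    unfolding S_def by (rule abs_sum_le_card_mult) (rule bound)
  have S_centered: "measure_pmf.expectation (Pi_pmf A d p) S = 0"
    unfolding S_def using insert.prems by (simp add: expectation_Pi_pmf_sum[where g=g, OF insert.hyps(1) bound])
  have split: "(\<Sum>j\<in>insert i A. g j ((f(i := y)) j)) = g i y + S f" for f y
    unfolding S_def using insert.hyps by (auto intro!: sum.cong)
  have sq_bound: "(g i y + S \<omega>)\<^sup>2 \<le> (B + real (card A) * B)\<^sup>2" for y \<omega>
    using bound[of i y] S_bound[of \<omega>] by (subst power2_le_iff_abs_le) linarith+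
  have "measure_pmf.expectation (Pi_pmf (insert i A) d p) (\<lambda>\<omega>. (\<Sum>j\<in>insert i A. g j (\<omega> j))\<^sup>2)
      = measure_pmf.expectation (pair_pmf (p i) (Pi_pmf A d p)) (\<lambda>(y, \<omega>). (g i y + S \<omega>)\<^sup>2)"
    by (simp only: Pi_pmf_insert[OF insert.hyps] integral_map_pmf case_prod_unfold split)
  also have "\<dots> = measure_pmf.expectation (p i)
      (\<lambda>y. (g i y)\<^sup>2 + measure_pmf.expectation (Pi_pmf A d p) (\<lambda>\<omega>. (S \<omega>)\<^sup>2))"
    by (subst expectation_pair_pmf_bounded[where B="(B + real (card A) * B)\<^sup>2"])
       (auto simp: sq_bound expectation_add_centered_square[OF S_bound S_centered])
  also have "\<dots> = measure_pmf.expectation (p i) (\<lambda>y. (g i y)\<^sup>2)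
      + measure_pmf.expectation (Pi_pmf A d p) (\<lambda>\<omega>. (S \<omega>)\<^sup>2)"
    using integrable_pmf_bounded_square[where f="g i", OF bound] by simp
  finally show ?case
    using insert by (simp add: S_def)
qed simp

lemma sum_sqrt_le_sqrt_card_sum:
  fixes a :: "'c \<Rightarrow> real"
  assumes "\<And>c. c \<in> C \<Longrightarrow> 0 \<le> a c"
  shows "(\<Sum>c\<in>C. sqrt (a c)) \<le> sqrt (real (card C) * (\<Sum>c\<in>C. a c))"
proof (rule real_le_rsqrt)
  have "(\<Sum>c\<in>C. sqrt (a c))\<^sup>2 \<le> (\<Sum>c\<in>C. (sqrt (a c))\<^sup>2) * card C"
    by (rule sum_squared_le_sum_of_squares)
  also have "(\<Sum>c\<in>C. (sqrt (a c))\<^sup>2) = (\<Sum>c\<in>C. a c)"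
    using assms by (intro sum.cong) auto
  finally show "(\<Sum>c\<in>C. sqrt (a c))\<^sup>2 \<le> real (card C) * (\<Sum>c\<in>C. a c)"
    by (simp add: mult.commute)
qed

text \<open>Variances of independent summands add up, and a \<open>[0, 1]\<close>-valued variable has variance at most
  its mean.\<close>
lemma Pi_pmf_abs_sum_deviation_le:
  fixes f :: "'i \<Rightarrow> 'b \<Rightarrow> real"
  assumes "finite A" and f_nonneg: "\<And>j y. 0 \<le> f j y" and f_le_1: "\<And>j y. f j y \<le> 1"
  shows "measure_pmf.expectation (Pi_pmf A d p) (\<lambda>\<omega>. \<bar>\<Sum>j\<in>A. f j (\<omega> j) - measure_pmf.expectation (p j) (f j)\<bar>)
       \<le> sqrt (\<Sum>j\<in>A. measure_pmf.expectation (p j) (f j))"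
proof -
  define m where "m j = measure_pmf.expectation (p j) (f j)" for j
  have f_int: "integrable (p j) (f j)" for j
    using f_nonneg f_le_1 by (intro integrable_pmf_bounded[where B=1]) (simp add: abs_le_iff order_trans[OF _ f_nonneg])
  have m_nonneg: "0 \<le> m j" for j
    unfolding m_def by (simp add: f_nonneg)
  have m_le_1: "m j \<le> 1" for j
    using integral_mono[OF f_int, of j "\<lambda>_. 1"] f_le_1 unfolding m_def by simp
  have dev_bound: "\<bar>f j y - m j\<bar> \<le> 1" for j y
    using f_nonneg[of j y] f_le_1[of j y] m_nonneg[of j] m_le_1[of j] by linarith
  have centered: "measure_pmf.expectation (p j) (\<lambda>y. f j y - m j) = 0" for j
    using f_int by (simp add: m_def)
  have "measure_pmf.expectation (Pi_pmf A d p) (\<lambda>\<omega>. \<bar>\<Sum>j\<in>A. f j (\<omega> j) - m j\<bar>)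
      \<le> sqrt (measure_pmf.expectation (Pi_pmf A d p) (\<lambda>\<omega>. (\<Sum>j\<in>A. f j (\<omega> j) - m j)\<^sup>2))"
    by (rule expectation_abs_le_sqrt_expectation_square[where B="real (card A) * 1"])
       (rule abs_sum_le_card_mult, rule dev_bound)
  also have "measure_pmf.expectation (Pi_pmf A d p) (\<lambda>\<omega>. (\<Sum>j\<in>A. f j (\<omega> j) - m j)\<^sup>2)
      = (\<Sum>j\<in>A. measure_pmf.expectation (p j) (\<lambda>y. (f j y - m j)\<^sup>2))"
    by (rule expectation_Pi_pmf_sum_square[where g="\<lambda>j y. f j y - m j", OF assms(1) dev_bound centered])
  also have "\<dots> \<le> (\<Sum>j\<in>A. m j)"
    unfolding m_def by (intro sum_mono expectation_centered_square_le_mean f_nonneg f_le_1)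
  finally show ?thesis
    by (simp add: m_def)
qed

text \<open>Summing over the values costs a factor \<open>sqrt CARD('c)\<close> by Cauchy-Schwarz, since the means of
  a probability vector sum to one.\<close>
lemma Pi_pmf_l1_deviation_le:
  fixes h :: "'i \<Rightarrow> 'b \<Rightarrow> 'c::finite \<Rightarrow> real"
  assumes "finite A"
    and h_nonneg: "\<And>j y c. 0 \<le> h j y c" and h_sum: "\<And>j y. (\<Sum>c\<in>UNIV. h j y c) = 1"
  shows "measure_pmf.expectation (Pi_pmf A d p)
           (\<lambda>\<omega>. \<Sum>c\<in>UNIV. \<bar>\<Sum>j\<in>A. h j (\<omega> j) c - measure_pmf.expectation (p j) (\<lambda>y. h j y c)\<bar>)
         \<le> sqrt (real CARD('c) * real (card A))"
proof -
  define m where "m j c = measure_pmf.expectation (p j) (\<lambda>y. h j y c)" for j c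
  have h_le_1: "h j y c \<le> 1" for j y c
    using member_le_sum[of c UNIV "h j y"] h_nonneg h_sum by simp
  have m_nonneg: "0 \<le> m j c" for j c
    unfolding m_def by (simp add: h_nonneg)
  have m_sum: "(\<Sum>c\<in>UNIV. m j c) = 1" for j
  proof -
    have "(\<Sum>c\<in>UNIV. m j c) = measure_pmf.expectation (p j) (\<lambda>y. \<Sum>c\<in>UNIV. h j y c)"
      unfolding m_def using h_nonneg h_le_1
      by (intro Bochner_Integration.integral_sum[symmetric] integrable_pmf_bounded[where B=1]) simp
    then show ?thesis
      by (simp add: h_sum)
  qed
  have m_le_1: "m j c \<le> 1" for j c
    using member_le_sum[of c UNIV "m j"] m_nonneg m_sum by simp
  have dev_bound: "\<bar>\<Sum>j\<in>A. h j (\<omega> j) c - m j c\<bar> \<le> real (card A)" for \<omega> c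
  proof -
    have "\<bar>h j (\<omega> j) c - m j c\<bar> \<le> 1" for j
      using h_nonneg[of j "\<omega> j" c] h_le_1[of j "\<omega> j" c] m_nonneg[of j c] m_le_1[of j c] by linarith
    then show ?thesis
      using abs_sum_le_card_mult[of A "\<lambda>j. h j (\<omega> j) c - m j c" 1] by simp
  qed
  have "measure_pmf.expectation (Pi_pmf A d p) (\<lambda>\<omega>. \<Sum>c\<in>UNIV. \<bar>\<Sum>j\<in>A. h j (\<omega> j) c - m j c\<bar>)
      = (\<Sum>c\<in>UNIV. measure_pmf.expectation (Pi_pmf A d p) (\<lambda>\<omega>. \<bar>\<Sum>j\<in>A. h j (\<omega> j) c - m j c\<bar>))"
    by (intro Bochner_Integration.integral_sum integrable_pmf_bounded[where B="real (card A)"])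
       (simp add: dev_bound)
  also have "\<dots> \<le> (\<Sum>c\<in>UNIV. sqrt (\<Sum>j\<in>A. m j c))"
    unfolding m_def by (intro sum_mono Pi_pmf_abs_sum_deviation_le assms(1) h_nonneg h_le_1)
  also have "\<dots> \<le> sqrt (real CARD('c) * (\<Sum>c\<in>UNIV. \<Sum>j\<in>A. m j c))"
    by (rule sum_sqrt_le_sqrt_card_sum) (simp add: sum_nonneg m_nonneg)
  also have "(\<Sum>c\<in>UNIV. \<Sum>j\<in>A. m j c) = real (card A)"
    by (subst sum.swap) (simp add: m_sum)
  finally show ?thesis
    unfolding m_def .
qed

section \<open>Finitely supported pmfs and empirical distributions\<close>

declare integrable_measure_pmf_finite [simp]

lemma expectation_mono_finite_pmf:
  fixes f g :: "'a \<Rightarrow> real"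
  assumes "finite (set_pmf M)" "\<And>x. x \<in> set_pmf M \<Longrightarrow> f x \<le> g x"
  shows "measure_pmf.expectation M f \<le> measure_pmf.expectation M g"
  by (rule integral_mono_AE) (use assms in \<open>auto simp: AE_measure_pmf_iff\<close>)

lemma expectation_bind_pmf_finite:
  fixes f :: "'b \<Rightarrow> real"
  assumes "finite (set_pmf M)" "\<And>x. x \<in> set_pmf M \<Longrightarrow> finite (set_pmf (N x))"
  shows "measure_pmf.expectation (bind_pmf M N) f
       = measure_pmf.expectation M (\<lambda>x. measure_pmf.expectation (N x) f)"
proof -
  have "measure_pmf.expectation (bind_pmf M N) f
      = (\<Sum>a\<in>set_pmf M. pmf M a *\<^sub>R measure_pmf.expectation (N a) f)"
    by (rule pmf_expectation_bind) (use assms in auto)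
  also have "\<dots> = measure_pmf.expectation M (\<lambda>x. measure_pmf.expectation (N x) f)"
    by (rule integral_measure_pmf[symmetric]) (use assms in auto)
  finally show ?thesis .
qed

lemma sum_pmf_UNIV [simp]: "(\<Sum>u\<in>UNIV. pmf (p :: 'u::finite pmf) u) = 1"
  by (rule sum_pmf_eq_1) auto

lemma expectation_finite_type:
  fixes f :: "'b::finite \<Rightarrow> real"
  shows "measure_pmf.expectation p f = (\<Sum>y\<in>UNIV. pmf p y * f y)"
  by (subst integral_measure_pmf_real[where A=UNIV]) (auto simp: mult.commute)

lemma expectation_indicator_pmf: "measure_pmf.expectation p (\<lambda>y. if y = u then 1 else 0) = pmf p u"
  by (subst integral_measure_pmf_real[where A="{u}"]) (auto split: if_splits)

lemma finite_set_Pi_pmf: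
  fixes p :: "'j \<Rightarrow> 'b::finite pmf"
  assumes "finite A"
  shows "finite (set_pmf (Pi_pmf A d p))"
  by (rule finite_subset[OF set_Pi_pmf_subset'[OF assms]]) (intro finite_PiE_dflt assms, simp)

lemma agents_eq_Sigma: "agents K N = Sigma {..<K} (\<lambda>k. {..<N k})"
  by (auto simp: agents_def)

lemma finite_agents [simp]: "finite (agents K N)"
  unfolding agents_eq_Sigma by auto

lemma finite_set_action_pmf [simp]:
  "finite (set_pmf (action_pmf K N (pol :: nat \<Rightarrow> nat \<Rightarrow> 'x::finite \<Rightarrow> _ \<Rightarrow> 'u::finite pmf) t s))"
  unfolding action_pmf_def by (rule finite_set_Pi_pmf) simp

lemma finite_set_next_pmf [simp]:
  "finite (set_pmf (next_pmf K N (P :: nat \<Rightarrow> 'x::finite \<Rightarrow> 'u::finite \<Rightarrow> _ \<Rightarrow> _ \<Rightarrow> 'x pmf) s a))"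
  unfolding next_pmf_def by (rule finite_set_Pi_pmf) simp

lemma finite_set_state_dist [simp]:
  "finite (set_pmf (state_dist K N (pol :: nat \<Rightarrow> nat \<Rightarrow> 'x::finite \<Rightarrow> _ \<Rightarrow> 'u::finite pmf) P x0 t))"
  by (induction t) auto

lemma finite_set_sa_dist [simp]:
  "finite (set_pmf (sa_dist K N (pol :: nat \<Rightarrow> nat \<Rightarrow> 'x::finite \<Rightarrow> _ \<Rightarrow> 'u::finite pmf) P x0 t))"
  unfolding sa_dist_def by auto

lemma emp_eq_average:
  "k < K \<Longrightarrow> emp K N s x k = (\<Sum>j<N k. if s (k, j) = x then 1 else 0) / real (N k)"
  unfolding emp_def by (simp add: sum.If_cases Collect_conj_eq lessThan_def Int_commute)

lemma sum_emp_mult: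
  fixes s :: "nat \<times> nat \<Rightarrow> 'a::finite"
  assumes "k < K"
  shows "(\<Sum>x\<in>UNIV. emp K N s x k * f x) = (\<Sum>j<N k. f (s (k, j))) / real (N k)"
proof -
  have "emp K N s x k * f x = (\<Sum>j<N k. if s (k, j) = x then f x else 0) / real (N k)" for x
    by (auto simp: emp_eq_average[OF assms] sum_distrib_right intro!: sum.cong)
  then have "(\<Sum>x\<in>UNIV. emp K N s x k * f x)
      = (\<Sum>x\<in>UNIV. \<Sum>j<N k. (if s (k, j) = x then f x else 0)) / real (N k)"
    by (simp add: sum_divide_distrib)
  also have "\<dots> = (\<Sum>j<N k. \<Sum>x\<in>UNIV. (if s (k, j) = x then f x else 0)) / real (N k)"
    by (subst sum.swap) (rule refl)
  finally show ?thesis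
    by simp
qed

lemma PK_nonneg: "\<mu> \<in> PK K \<Longrightarrow> k < K \<Longrightarrow> 0 \<le> \<mu> x k"
  and PK_sum_eq_1: "\<mu> \<in> PK K \<Longrightarrow> k < K \<Longrightarrow> (\<Sum>x\<in>UNIV. \<mu> x k) = 1"
  unfolding PK_def by auto

lemma emp_in_PK:
  fixes s :: "nat \<times> nat \<Rightarrow> 'a::finite"
  assumes "\<forall>k<K. 1 \<le> N k"
  shows "emp K N s \<in> PK K"
proof -
  have "(\<Sum>x\<in>UNIV. emp K N s x k) = 1" if "k < K" for k
    using sum_emp_mult[OF that, of N s "\<lambda>_. 1"] assms that by (simp add: Suc_le_eq)
  then show ?thesis
    unfolding PK_def by (auto simp: emp_def)
qed

lemma class_average_deviation_le:
  fixes p :: "nat \<times> nat \<Rightarrow> 'b pmf" and h :: "nat \<times> nat \<Rightarrow> 'b \<Rightarrow> 'c::finite \<Rightarrow> real"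
  assumes k: "k < K" and N_k: "1 \<le> N k"
    and h_nonneg: "\<And>j y c. 0 \<le> h j y c" and h_sum: "\<And>j y. (\<Sum>c\<in>UNIV. h j y c) = 1"
  shows "measure_pmf.expectation (Pi_pmf (agents K N) d p)
      (\<lambda>\<omega>. \<Sum>c\<in>UNIV. \<bar>(\<Sum>j<N k. h (k, j) (\<omega> (k, j)) c) / real (N k)
           - (\<Sum>j<N k. measure_pmf.expectation (p (k, j)) (\<lambda>y. h (k, j) y c)) / real (N k)\<bar>)
    \<le> sqrt (real CARD('c)) / sqrt (real (N k))"
proof -
  define B where "B = (\<lambda>j. (k, j)) ` {..<N k}"
  define F where "F \<omega> = (\<Sum>c\<in>UNIV. \<bar>\<Sum>i\<in>B. h i (\<omega> i) c - measure_pmf.expectation (p i) (\<lambda>y. h i y c)\<bar>)"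
    for \<omega> :: "nat \<times> nat \<Rightarrow> 'b"
  have B_sub: "B \<subseteq> agents K N"
    unfolding B_def agents_def using k by auto
  have inj: "inj_on (\<lambda>j. (k, j)) {..<N k}"
    by (auto simp: inj_on_def)
  have card_B: "card B = N k"
    unfolding B_def by (simp add: card_image[OF inj])
  have N_k_pos: "0 < real (N k)"
    using N_k by simp
  have reindex: "(\<Sum>c\<in>UNIV. \<bar>(\<Sum>j<N k. h (k, j) (\<omega> (k, j)) c) / real (N k)
           - (\<Sum>j<N k. measure_pmf.expectation (p (k, j)) (\<lambda>y. h (k, j) y c)) / real (N k)\<bar>)
      = F \<omega> / real (N k)" for \<omega>
    unfolding F_def B_def using N_k_pos
    by (simp add: sum.reindex[OF inj] sum_subtractf sum_divide_distrib[symmetric] diff_divide_distrib[symmetric])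
  have "measure_pmf.expectation (Pi_pmf (agents K N) d p) F = measure_pmf.expectation (Pi_pmf B d p) F"
    by (rule expectation_Pi_pmf_restrict[OF finite_agents B_sub]) (simp add: F_def)
  also have "\<dots> \<le> sqrt (real CARD('c) * real (card B))"
    unfolding F_def using B_sub by (intro Pi_pmf_l1_deviation_le h_nonneg h_sum) (auto intro: finite_subset)
  finally have "measure_pmf.expectation (Pi_pmf (agents K N) d p) F / real (N k)
      \<le> sqrt (real CARD('c) * real (N k)) / real (N k)"
    unfolding card_B using N_k_pos by (simp add: divide_right_mono)
  also have "\<dots> = sqrt (real CARD('c)) / sqrt (real (N k))"
    using N_k_pos by (simp add: real_sqrt_mult field_simps)
  finally show ?thesis
    by (simp add: reindex)
qed

lemma emp_Pi_pmf_deviation_le: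
  fixes q :: "nat \<times> nat \<Rightarrow> 'a::finite pmf"
  assumes "k < K" "1 \<le> N k"
  shows "measure_pmf.expectation (Pi_pmf (agents K N) d q)
      (\<lambda>\<omega>. \<Sum>x\<in>UNIV. \<bar>emp K N \<omega> x k - (\<Sum>j<N k. pmf (q (k, j)) x) / real (N k)\<bar>)
    \<le> sqrt (real CARD('a)) / sqrt (real (N k))"
  using class_average_deviation_le[where h="\<lambda>_ y x. if y = x then 1 else 0" and p=q and d=d
      and N=N and k=k and K=K, OF assms]
  by (simp add: emp_eq_average[OF assms(1)] expectation_indicator_pmf)

section \<open>Mean-field maps\<close>

lemma sum_abs_triple_product_diff_le:
  fixes f1 f2 :: "'c::finite \<Rightarrow> real"
  assumes "0 \<le> m2" "0 \<le> p1" "0 \<le> p2"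
    and F: "(\<Sum>c\<in>UNIV. \<bar>f1 c\<bar>) \<le> F" and G: "(\<Sum>c\<in>UNIV. \<bar>f1 c - f2 c\<bar>) \<le> G"
  shows "(\<Sum>c\<in>UNIV. \<bar>m1 * p1 * f1 c - m2 * p2 * f2 c\<bar>)
       \<le> \<bar>m1 - m2\<bar> * p1 * F + m2 * \<bar>p1 - p2\<bar> * F + m2 * p2 * G"
proof -
  have "\<bar>m1 * p1 * f1 c - m2 * p2 * f2 c\<bar>
      \<le> \<bar>m1 - m2\<bar> * p1 * \<bar>f1 c\<bar> + m2 * \<bar>p1 - p2\<bar> * \<bar>f1 c\<bar> + m2 * p2 * \<bar>f1 c - f2 c\<bar>" for c
  proof -
    have "m1 * p1 * f1 c - m2 * p2 * f2 c = (m1 - m2) * p1 * f1 c + m2 * (p1 - p2) * f1 c + m2 * p2 * (f1 c - f2 c)"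
      by (simp add: algebra_simps)
    also have "\<bar>\<dots>\<bar> \<le> \<bar>(m1 - m2) * p1 * f1 c\<bar> + \<bar>m2 * (p1 - p2) * f1 c\<bar> + \<bar>m2 * p2 * (f1 c - f2 c)\<bar>"
      by (rule order_trans[OF abs_triangle_ineq add_right_mono[OF abs_triangle_ineq]])
    finally show ?thesis
      using assms(1-3) by (simp add: abs_mult)
  qed
  then have "(\<Sum>c\<in>UNIV. \<bar>m1 * p1 * f1 c - m2 * p2 * f2 c\<bar>)
      \<le> \<bar>m1 - m2\<bar> * p1 * (\<Sum>c\<in>UNIV. \<bar>f1 c\<bar>) + m2 * \<bar>p1 - p2\<bar> * (\<Sum>c\<in>UNIV. \<bar>f1 c\<bar>)
        + m2 * p2 * (\<Sum>c\<in>UNIV. \<bar>f1 c - f2 c\<bar>)"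
    by (simp add: sum_distrib_left sum.distrib[symmetric] sum_mono)
  also have "\<dots> \<le> \<bar>m1 - m2\<bar> * p1 * F + m2 * \<bar>p1 - p2\<bar> * F + m2 * p2 * G"
    using assms by (intro add_mono mult_left_mono) auto
  finally show ?thesis .
qed

text \<open>The three terms account for the change of the state weights, of the decision rules and of
  the quantity being averaged.\<close>
lemma l1_mixture_diff_le:
  fixes m1 m2 :: "'x::finite \<Rightarrow> real" and q1 q2 :: "'x \<Rightarrow> 'u::finite pmf"
    and f1 f2 :: "'x \<Rightarrow> 'u \<Rightarrow> 'c::finite \<Rightarrow> real"
  assumes m2: "\<And>x. 0 \<le> m2 x" "(\<Sum>x\<in>UNIV. m2 x) = 1"
    and F: "\<And>x u. (\<Sum>c\<in>UNIV. \<bar>f1 x u c\<bar>) \<le> F"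
    and G: "\<And>x u. (\<Sum>c\<in>UNIV. \<bar>f1 x u c - f2 x u c\<bar>) \<le> G"
  shows "(\<Sum>c\<in>UNIV. \<bar>\<Sum>x\<in>UNIV. \<Sum>u\<in>UNIV. m1 x * pmf (q1 x) u * f1 x u c - m2 x * pmf (q2 x) u * f2 x u c\<bar>)
     \<le> F * (\<Sum>x\<in>UNIV. \<bar>m1 x - m2 x\<bar>) + F * (\<Sum>x\<in>UNIV. m2 x * l1pmf (q1 x) (q2 x)) + G"
proof -
  have "(\<Sum>c\<in>UNIV. \<bar>\<Sum>x\<in>UNIV. \<Sum>u\<in>UNIV. m1 x * pmf (q1 x) u * f1 x u c - m2 x * pmf (q2 x) u * f2 x u c\<bar>)
      \<le> (\<Sum>c\<in>UNIV. \<Sum>x\<in>UNIV. \<Sum>u\<in>UNIV. \<bar>m1 x * pmf (q1 x) u * f1 x u c - m2 x * pmf (q2 x) u * f2 x u c\<bar>)"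
    by (rule sum_mono, rule order_trans[OF sum_abs], rule sum_mono, rule sum_abs)
  also have "\<dots> = (\<Sum>x\<in>UNIV. \<Sum>u\<in>UNIV. \<Sum>c\<in>UNIV. \<bar>m1 x * pmf (q1 x) u * f1 x u c - m2 x * pmf (q2 x) u * f2 x u c\<bar>)"
    by (subst sum.swap) (rule sum.cong[OF refl], rule sum.swap)
  also have "\<dots> \<le> (\<Sum>x\<in>UNIV. \<Sum>u\<in>UNIV. \<bar>m1 x - m2 x\<bar> * pmf (q1 x) u * F
        + m2 x * \<bar>pmf (q1 x) u - pmf (q2 x) u\<bar> * F + m2 x * pmf (q2 x) u * G)"
    by (intro sum_mono sum_abs_triple_product_diff_le F G) (auto simp: m2)
  also have "\<dots> = (\<Sum>x\<in>UNIV. \<bar>m1 x - m2 x\<bar> * F + m2 x * l1pmf (q1 x) (q2 x) * F + m2 x * G)"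
    by (simp add: l1pmf_def sum.distrib sum_distrib_left[symmetric] sum_distrib_right[symmetric]
                  mult.assoc mult.commute mult.left_commute)
  also have "\<dots> = F * (\<Sum>x\<in>UNIV. \<bar>m1 x - m2 x\<bar>) + F * (\<Sum>x\<in>UNIV. m2 x * l1pmf (q1 x) (q2 x))
      + G * (\<Sum>x\<in>UNIV. m2 x)"
    by (simp add: sum.distrib sum_distrib_left[symmetric] sum_distrib_right[symmetric] mult.commute)
  finally show ?thesis
    using m2 by simp
qed

lemma nuMF_in_PK:
  fixes pt :: "nat \<Rightarrow> 'a::finite \<Rightarrow> ('a \<Rightarrow> nat \<Rightarrow> real) \<Rightarrow> 'b::finite pmf"
  assumes "\<mu> \<in> PK K"
  shows "nuMF pt \<mu> \<in> PK K"
proof -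
  have "(\<Sum>u\<in>UNIV. nuMF pt \<mu> u k) = 1" if "k < K" for k
  proof -
    have "(\<Sum>u\<in>UNIV. nuMF pt \<mu> u k) = (\<Sum>x\<in>UNIV. \<mu> x k)"
      unfolding nuMF_def by (subst sum.swap) (simp add: sum_distrib_right[symmetric])
    then show ?thesis
      using PK_sum_eq_1[OF assms that] by simp
  qed
  then show ?thesis
    using assms unfolding PK_def nuMF_def by (auto intro: sum_nonneg)
qed

lemma PMF_in_PK:
  fixes pt :: "nat \<Rightarrow> 'x::finite \<Rightarrow> ('x \<Rightarrow> nat \<Rightarrow> real) \<Rightarrow> 'u::finite pmf"
  assumes "\<mu> \<in> PK K"
  shows "PMF P pt \<mu> \<in> PK K"
proof -
  have "(\<Sum>y\<in>UNIV. PMF P pt \<mu> y k) = 1" if "k < K" for k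
  proof -
    have "(\<Sum>y\<in>UNIV. PMF P pt \<mu> y k)
        = (\<Sum>x\<in>UNIV. \<Sum>u\<in>UNIV. \<mu> x k * pmf (pt k x \<mu>) u * (\<Sum>y\<in>UNIV. pmf (P k x u \<mu> (nuMF pt \<mu>)) y))"
      unfolding PMF_def sum_distrib_left
      by (subst sum.swap) (rule sum.cong[OF refl], rule sum.swap)
    also have "\<dots> = (\<Sum>x\<in>UNIV. \<mu> x k)"
      by (simp add: sum_distrib_left[symmetric])
    finally show ?thesis
      using PK_sum_eq_1[OF assms that] by simp
  qed
  then show ?thesis
    using assms unfolding PK_def PMF_def by (auto intro!: sum_nonneg)
qed

lemma mu_traj_in_PK: "\<mu>0 \<in> PK K \<Longrightarrow> mu_traj P pol \<mu>0 t \<in> PK K"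
  by (induction t) (auto intro: PMF_in_PK)

section \<open>Lipschitz estimates for the multi-class model\<close>

lemma l1K_self [simp]: "l1K K \<mu> \<mu> = 0"
  by (simp add: l1K_def)

locale mf_model =
  fixes K :: nat and N :: "nat \<Rightarrow> nat" and MR LR LP LQ :: real
    and P :: "nat \<Rightarrow> 'x::finite \<Rightarrow> 'u::finite \<Rightarrow> ('x \<Rightarrow> nat \<Rightarrow> real) \<Rightarrow> ('u \<Rightarrow> nat \<Rightarrow> real) \<Rightarrow> 'x pmf"
    and r :: "nat \<Rightarrow> 'x \<Rightarrow> 'u \<Rightarrow> ('x \<Rightarrow> nat \<Rightarrow> real) \<Rightarrow> ('u \<Rightarrow> nat \<Rightarrow> real) \<Rightarrow> real"
    and pol :: "nat \<Rightarrow> nat \<Rightarrow> 'x \<Rightarrow> ('x \<Rightarrow> nat \<Rightarrow> real) \<Rightarrow> 'u pmf"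
  assumes N_pos: "\<forall>k<K. 1 \<le> N k"
    and consts_nonneg: "0 \<le> MR" "0 \<le> LR" "0 \<le> LP" "0 \<le> LQ"
    and r_bound: "\<forall>k<K. \<forall>x u \<mu> \<nu>. \<mu> \<in> PK K \<longrightarrow> \<nu> \<in> PK K \<longrightarrow> \<bar>r k x u \<mu> \<nu>\<bar> \<le> MR"
    and r_lip: "\<forall>k<K. \<forall>x u \<mu>1 \<mu>2 \<nu>1 \<nu>2. \<mu>1 \<in> PK K \<longrightarrow> \<mu>2 \<in> PK K \<longrightarrow> \<nu>1 \<in> PK K \<longrightarrow> \<nu>2 \<in> PK K \<longrightarrow>
                 \<bar>r k x u \<mu>1 \<nu>1 - r k x u \<mu>2 \<nu>2\<bar> \<le> LR * (l1K K \<mu>1 \<mu>2 + l1K K \<nu>1 \<nu>2)"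
    and P_lip: "\<forall>k<K. \<forall>x u \<mu>1 \<mu>2 \<nu>1 \<nu>2. \<mu>1 \<in> PK K \<longrightarrow> \<mu>2 \<in> PK K \<longrightarrow> \<nu>1 \<in> PK K \<longrightarrow> \<nu>2 \<in> PK K \<longrightarrow>
                 l1pmf (P k x u \<mu>1 \<nu>1) (P k x u \<mu>2 \<nu>2) \<le> LP * (l1K K \<mu>1 \<mu>2 + l1K K \<nu>1 \<nu>2)"
    and pol_lip: "\<forall>t. \<forall>k<K. \<forall>x \<mu>1 \<mu>2. \<mu>1 \<in> PK K \<longrightarrow> \<mu>2 \<in> PK K \<longrightarrow>
                 l1pmf (pol t k x \<mu>1) (pol t k x \<mu>2) \<le> LQ * l1K K \<mu>1 \<mu>2"
begin

definition PMF_lip :: real where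
  "PMF_lip = LQ + LP * (2 + real K * LQ)"

definition rMF_lip :: real where
  "rMF_lip = MR * LQ + LR * (2 + real K * LQ)"

lemma emp_PK [simp]: "emp K N s \<in> PK K"
  by (rule emp_in_PK[OF N_pos])

lemma policy_mixture_l1_le:
  assumes "\<mu>1 \<in> PK K" "\<mu>2 \<in> PK K" "k < K"
  shows "(\<Sum>x\<in>UNIV. \<mu>2 x k * l1pmf (pol t k x \<mu>1) (pol t k x \<mu>2)) \<le> LQ * l1K K \<mu>1 \<mu>2"
proof -
  have "(\<Sum>x\<in>UNIV. \<mu>2 x k * l1pmf (pol t k x \<mu>1) (pol t k x \<mu>2)) \<le> (\<Sum>x\<in>UNIV. \<mu>2 x k * (LQ * l1K K \<mu>1 \<mu>2))"
    using pol_lip assms by (intro sum_mono mult_left_mono) (auto simp: PK_nonneg)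
  also have "\<dots> = LQ * l1K K \<mu>1 \<mu>2"
    using assms by (simp add: sum_distrib_right[symmetric] PK_sum_eq_1)
  finally show ?thesis .
qed

lemma l1K_nuMF_le:
  assumes "\<mu>1 \<in> PK K" "\<mu>2 \<in> PK K"
  shows "l1K K (nuMF (pol t) \<mu>1) (nuMF (pol t) \<mu>2) \<le> (1 + real K * LQ) * l1K K \<mu>1 \<mu>2"
proof -
  have class_le: "(\<Sum>u\<in>UNIV. \<bar>nuMF (pol t) \<mu>1 u k - nuMF (pol t) \<mu>2 u k\<bar>)
      \<le> (\<Sum>x\<in>UNIV. \<bar>\<mu>1 x k - \<mu>2 x k\<bar>) + LQ * l1K K \<mu>1 \<mu>2" if k: "k < K" for k
  proof -
    have "(\<Sum>u\<in>UNIV. \<bar>nuMF (pol t) \<mu>1 u k - nuMF (pol t) \<mu>2 u k\<bar>)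
       = (\<Sum>c\<in>UNIV. \<bar>\<Sum>x\<in>UNIV. \<Sum>u\<in>UNIV. \<mu>1 x k * pmf (pol t k x \<mu>1) u * (if u = c then 1 else 0)
             - \<mu>2 x k * pmf (pol t k x \<mu>2) u * (if u = c then 1 else 0)\<bar>)"
      unfolding nuMF_def by (simp add: sum_subtractf[symmetric] mult.commute if_distrib cong: if_cong)
    also have "\<dots> \<le> 1 * (\<Sum>x\<in>UNIV. \<bar>\<mu>1 x k - \<mu>2 x k\<bar>)
        + 1 * (\<Sum>x\<in>UNIV. \<mu>2 x k * l1pmf (pol t k x \<mu>1) (pol t k x \<mu>2)) + 0"
      using assms(2) k by (intro l1_mixture_diff_le) (auto simp: PK_nonneg PK_sum_eq_1)
    finally show ?thesis
      using policy_mixture_l1_le[OF assms k, of t] by simp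
  qed
  have "l1K K (nuMF (pol t) \<mu>1) (nuMF (pol t) \<mu>2)
      \<le> (\<Sum>k<K. (\<Sum>x\<in>UNIV. \<bar>\<mu>1 x k - \<mu>2 x k\<bar>) + LQ * l1K K \<mu>1 \<mu>2)"
    unfolding l1K_def[of K "nuMF _ _"] by (rule sum_mono) (simp add: class_le)
  also have "\<dots> = (1 + real K * LQ) * l1K K \<mu>1 \<mu>2"
    by (simp add: sum.distrib l1K_def algebra_simps)
  finally show ?thesis .
qed

lemma PMF_class_l1_le:
  assumes "\<mu>1 \<in> PK K" "\<mu>2 \<in> PK K" and k: "k < K"
  shows "(\<Sum>y\<in>UNIV. \<bar>PMF P (pol t) \<mu>1 y k - PMF P (pol t) \<mu>2 y k\<bar>)
      \<le> (\<Sum>x\<in>UNIV. \<bar>\<mu>1 x k - \<mu>2 x k\<bar>) + PMF_lip * l1K K \<mu>1 \<mu>2"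
proof -
  let ?\<nu>1 = "nuMF (pol t) \<mu>1" and ?\<nu>2 = "nuMF (pol t) \<mu>2"
  have P_diff: "(\<Sum>c\<in>UNIV. \<bar>pmf (P k x u \<mu>1 ?\<nu>1) c - pmf (P k x u \<mu>2 ?\<nu>2) c\<bar>)
      \<le> LP * ((2 + real K * LQ) * l1K K \<mu>1 \<mu>2)" for x u
  proof -
    have "l1pmf (P k x u \<mu>1 ?\<nu>1) (P k x u \<mu>2 ?\<nu>2) \<le> LP * (l1K K \<mu>1 \<mu>2 + l1K K ?\<nu>1 ?\<nu>2)"
      using P_lip k assms nuMF_in_PK[OF assms(1)] nuMF_in_PK[OF assms(2)] by blast
    also have "\<dots> \<le> LP * ((2 + real K * LQ) * l1K K \<mu>1 \<mu>2)"
      using l1K_nuMF_le[OF assms(1,2), of t] consts_nonneg by (intro mult_left_mono) (auto simp: algebra_simps)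
    finally show ?thesis
      unfolding l1pmf_def .
  qed
  have "(\<Sum>y\<in>UNIV. \<bar>PMF P (pol t) \<mu>1 y k - PMF P (pol t) \<mu>2 y k\<bar>)
      = (\<Sum>c\<in>UNIV. \<bar>\<Sum>x\<in>UNIV. \<Sum>u\<in>UNIV. \<mu>1 x k * pmf (pol t k x \<mu>1) u * pmf (P k x u \<mu>1 ?\<nu>1) c
             - \<mu>2 x k * pmf (pol t k x \<mu>2) u * pmf (P k x u \<mu>2 ?\<nu>2) c\<bar>)"
    unfolding PMF_def by (simp add: sum_subtractf[symmetric])
  also have "\<dots> \<le> 1 * (\<Sum>x\<in>UNIV. \<bar>\<mu>1 x k - \<mu>2 x k\<bar>)
      + 1 * (\<Sum>x\<in>UNIV. \<mu>2 x k * l1pmf (pol t k x \<mu>1) (pol t k x \<mu>2))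
      + LP * ((2 + real K * LQ) * l1K K \<mu>1 \<mu>2)"
    using assms(2) k by (intro l1_mixture_diff_le P_diff) (auto simp: PK_nonneg PK_sum_eq_1)
  finally show ?thesis
    using policy_mixture_l1_le[OF assms, of t] by (simp add: PMF_lip_def algebra_simps)
qed

lemma rMF_class_diff_le:
  assumes "\<mu>1 \<in> PK K" "\<mu>2 \<in> PK K" and k: "k < K"
  shows "\<bar>rMF r (pol t) \<mu>1 k - rMF r (pol t) \<mu>2 k\<bar>
      \<le> MR * (\<Sum>x\<in>UNIV. \<bar>\<mu>1 x k - \<mu>2 x k\<bar>) + rMF_lip * l1K K \<mu>1 \<mu>2"
proof -
  let ?\<nu>1 = "nuMF (pol t) \<mu>1" and ?\<nu>2 = "nuMF (pol t) \<mu>2"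
  have r_diff: "\<bar>r k x u \<mu>1 ?\<nu>1 - r k x u \<mu>2 ?\<nu>2\<bar> \<le> LR * ((2 + real K * LQ) * l1K K \<mu>1 \<mu>2)" for x u
  proof -
    have "\<bar>r k x u \<mu>1 ?\<nu>1 - r k x u \<mu>2 ?\<nu>2\<bar> \<le> LR * (l1K K \<mu>1 \<mu>2 + l1K K ?\<nu>1 ?\<nu>2)"
      using r_lip k assms nuMF_in_PK[OF assms(1)] nuMF_in_PK[OF assms(2)] by blast
    also have "\<dots> \<le> LR * ((2 + real K * LQ) * l1K K \<mu>1 \<mu>2)"
      using l1K_nuMF_le[OF assms(1,2), of t] consts_nonneg by (intro mult_left_mono) (auto simp: algebra_simps)
    finally show ?thesis .
  qed
  have r_abs: "\<bar>r k x u \<mu>1 ?\<nu>1\<bar> \<le> MR" for x u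
    using r_bound k assms nuMF_in_PK[OF assms(1)] by blast
  \<comment> \<open>a scalar is a vector indexed by \<open>unit\<close>\<close>
  have "\<bar>rMF r (pol t) \<mu>1 k - rMF r (pol t) \<mu>2 k\<bar>
      = (\<Sum>c\<in>(UNIV::unit set). \<bar>\<Sum>x\<in>UNIV. \<Sum>u\<in>UNIV. \<mu>1 x k * pmf (pol t k x \<mu>1) u * (\<lambda>x u c. r k x u \<mu>1 ?\<nu>1) x u c
             - \<mu>2 x k * pmf (pol t k x \<mu>2) u * (\<lambda>x u c. r k x u \<mu>2 ?\<nu>2) x u c\<bar>)"
    unfolding rMF_def by (simp add: sum_subtractf[symmetric])
  also have "\<dots> \<le> MR * (\<Sum>x\<in>UNIV. \<bar>\<mu>1 x k - \<mu>2 x k\<bar>)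
      + MR * (\<Sum>x\<in>UNIV. \<mu>2 x k * l1pmf (pol t k x \<mu>1) (pol t k x \<mu>2))
      + LR * ((2 + real K * LQ) * l1K K \<mu>1 \<mu>2)"
    using assms(2) k by (intro l1_mixture_diff_le) (auto simp: PK_nonneg PK_sum_eq_1 r_diff r_abs)
  also have "\<dots> \<le> MR * (\<Sum>x\<in>UNIV. \<bar>\<mu>1 x k - \<mu>2 x k\<bar>) + MR * (LQ * l1K K \<mu>1 \<mu>2)
      + LR * ((2 + real K * LQ) * l1K K \<mu>1 \<mu>2)"
    using policy_mixture_l1_le[OF assms] consts_nonneg by (intro add_mono mult_left_mono) auto
  finally show ?thesis
    by (simp add: rMF_lip_def algebra_simps)
qed

lemma rMF_abs_le:
  assumes "\<mu> \<in> PK K" "k < K"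
  shows "\<bar>rMF r (pol t) \<mu> k\<bar> \<le> MR"
proof -
  have "\<bar>rMF r (pol t) \<mu> k\<bar> \<le> (\<Sum>x\<in>UNIV. \<Sum>u\<in>UNIV. \<bar>\<mu> x k * pmf (pol t k x \<mu>) u * r k x u \<mu> (nuMF (pol t) \<mu>)\<bar>)"
    unfolding rMF_def by (rule order_trans[OF sum_abs], rule sum_mono, rule sum_abs)
  also have "\<dots> \<le> (\<Sum>x\<in>UNIV. \<Sum>u\<in>UNIV. \<mu> x k * pmf (pol t k x \<mu>) u * MR)"
  proof (intro sum_mono)
    fix x u
    have "\<bar>r k x u \<mu> (nuMF (pol t) \<mu>)\<bar> \<le> MR"
      using r_bound assms nuMF_in_PK[OF assms(1)] by blast
    then show "\<bar>\<mu> x k * pmf (pol t k x \<mu>) u * r k x u \<mu> (nuMF (pol t) \<mu>)\<bar> \<le> \<mu> x k * pmf (pol t k x \<mu>) u * MR"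
      using PK_nonneg[OF assms] by (simp add: abs_mult mult_left_mono)
  qed
  also have "\<dots> = MR"
    using assms by (simp add: sum_distrib_left[symmetric] sum_distrib_right[symmetric] PK_sum_eq_1)
  finally show ?thesis .
qed

lemma stage_reward_abs_le: "\<bar>stage_reward K N r s a\<bar> \<le> real (Npop K N) * MR"
proof -
  have "\<bar>stage_reward K N r s a\<bar> \<le> (\<Sum>k<K. \<Sum>j<N k. \<bar>r k (s (k, j)) (a (k, j)) (emp K N s) (emp K N a)\<bar>)"
    unfolding stage_reward_def by (rule order_trans[OF sum_abs], rule sum_mono, rule sum_abs)
  also have "\<dots> \<le> (\<Sum>k<K. \<Sum>j<N k. MR)"
    using r_bound by (intro sum_mono) auto
  also have "\<dots> = real (Npop K N) * MR"
    unfolding Npop_def by (simp add: sum_distrib_right)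
  finally show ?thesis .
qed

end

section \<open>One step of the N-agent system\<close>

context mf_model
begin

lemma nuMF_emp_eq_average:
  assumes "k < K"
  shows "nuMF (pol t) (emp K N s) u k = (\<Sum>j<N k. pmf (pol t k (s (k, j)) (emp K N s)) u) / real (N k)"
  using sum_emp_mult[OF assms, of N s "\<lambda>x. pmf (pol t k x (emp K N s)) u"] by (simp add: nuMF_def mult.commute)

lemma action_emp_deviation_le:
  assumes k: "k < K"
  shows "measure_pmf.expectation (action_pmf K N pol t s)
     (\<lambda>a. \<Sum>u\<in>UNIV. \<bar>emp K N a u k - nuMF (pol t) (emp K N s) u k\<bar>) \<le> sqrt (real CARD('u)) / sqrt (real (N k))"
  using emp_Pi_pmf_deviation_le[where q="\<lambda>(k, j). pol t k (s (k, j)) (emp K N s)" and d=undefined, OF k]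
    N_pos k
  by (simp add: action_pmf_def nuMF_emp_eq_average)

lemma expected_action_l1K_le:
  "measure_pmf.expectation (action_pmf K N pol t s) (\<lambda>a. l1K K (emp K N a) (nuMF (pol t) (emp K N s)))
     \<le> sqrt (real CARD('u)) * (\<Sum>k<K. 1 / sqrt (real (N k)))"
proof -
  have "measure_pmf.expectation (action_pmf K N pol t s) (\<lambda>a. l1K K (emp K N a) (nuMF (pol t) (emp K N s)))
     = (\<Sum>k<K. measure_pmf.expectation (action_pmf K N pol t s)
         (\<lambda>a. \<Sum>u\<in>UNIV. \<bar>emp K N a u k - nuMF (pol t) (emp K N s) u k\<bar>))"
    unfolding l1K_def by (rule Bochner_Integration.integral_sum) simp
  also have "\<dots> \<le> (\<Sum>k<K. sqrt (real CARD('u)) / sqrt (real (N k)))"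
    by (intro sum_mono action_emp_deviation_le) simp
  finally show ?thesis
    by (simp add: sum_distrib_left)
qed

lemma next_emp_deviation_le:
  assumes k: "k < K"
  shows "measure_pmf.expectation (next_pmf K N P s a)
     (\<lambda>s'. \<Sum>x\<in>UNIV. \<bar>emp K N s' x k
        - (\<Sum>j<N k. pmf (P k (s (k, j)) (a (k, j)) (emp K N s) (emp K N a)) x) / real (N k)\<bar>)
     \<le> sqrt (real CARD('x)) / sqrt (real (N k))"
  using emp_Pi_pmf_deviation_le[where q="\<lambda>(k, j). P k (s (k, j)) (a (k, j)) (emp K N s) (emp K N a)"
      and d=undefined, OF k] N_pos k
  by (simp add: next_pmf_def)

lemma PMF_emp_eq_average:
  assumes "k < K"
  shows "PMF P (pol t) (emp K N s) x k
       = (\<Sum>j<N k. measure_pmf.expectation (pol t k (s (k, j)) (emp K N s))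
            (\<lambda>u. pmf (P k (s (k, j)) u (emp K N s) (nuMF (pol t) (emp K N s))) x)) / real (N k)"
proof -
  let ?\<mu> = "emp K N s" and ?\<nu> = "nuMF (pol t) (emp K N s)"
  have "PMF P (pol t) ?\<mu> x k = (\<Sum>z\<in>UNIV. ?\<mu> z k * (\<Sum>u\<in>UNIV. pmf (pol t k z ?\<mu>) u * pmf (P k z u ?\<mu> ?\<nu>) x))"
    unfolding PMF_def by (simp add: sum_distrib_left mult.assoc)
  also have "\<dots> = (\<Sum>j<N k. \<Sum>u\<in>UNIV. pmf (pol t k (s (k, j)) ?\<mu>) u * pmf (P k (s (k, j)) u ?\<mu> ?\<nu>) x) / real (N k)"
    by (rule sum_emp_mult[OF assms])
  finally show ?thesis
    by (simp add: expectation_finite_type)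
qed

lemma action_average_deviation_le:
  assumes k: "k < K"
  shows "measure_pmf.expectation (action_pmf K N pol t s)
     (\<lambda>a. \<Sum>x\<in>UNIV. \<bar>(\<Sum>j<N k. pmf (P k (s (k, j)) (a (k, j)) (emp K N s) (nuMF (pol t) (emp K N s))) x) / real (N k)
          - PMF P (pol t) (emp K N s) x k\<bar>)
     \<le> sqrt (real CARD('x)) / sqrt (real (N k))"
  using class_average_deviation_le[where p="\<lambda>(k, j). pol t k (s (k, j)) (emp K N s)" and d=undefined
      and h="\<lambda>i u. pmf (P (fst i) (s i) u (emp K N s) (nuMF (pol t) (emp K N s)))" and k=k and K=K and N=N, OF k]
    N_pos k
  by (simp add: action_pmf_def PMF_emp_eq_average)

lemma next_mean_emp_nuMF_diff_le:
  assumes k: "k < K"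
  shows "(\<Sum>x\<in>UNIV. \<bar>(\<Sum>j<N k. pmf (P k (s (k, j)) (a (k, j)) (emp K N s) (emp K N a)) x) / real (N k)
         - (\<Sum>j<N k. pmf (P k (s (k, j)) (a (k, j)) (emp K N s) (nuMF (pol t) (emp K N s))) x) / real (N k)\<bar>)
      \<le> LP * l1K K (emp K N a) (nuMF (pol t) (emp K N s))"
proof -
  let ?\<mu> = "emp K N s" and ?\<nu> = "nuMF (pol t) (emp K N s)" and ?e = "emp K N a"
  let ?p1 = "\<lambda>j. P k (s (k, j)) (a (k, j)) ?\<mu> ?e" and ?p2 = "\<lambda>j. P k (s (k, j)) (a (k, j)) ?\<mu> ?\<nu>"
  have N_k: "0 < real (N k)"
    using N_pos k by auto
  have "(\<Sum>x\<in>UNIV. \<bar>(\<Sum>j<N k. pmf (?p1 j) x) / real (N k) - (\<Sum>j<N k. pmf (?p2 j) x) / real (N k)\<bar>)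
      = (\<Sum>x\<in>UNIV. \<bar>\<Sum>j<N k. pmf (?p1 j) x - pmf (?p2 j) x\<bar>) / real (N k)"
    using N_k by (simp add: sum_divide_distrib[symmetric] diff_divide_distrib[symmetric] sum_subtractf)
  also have "\<dots> \<le> (\<Sum>x\<in>UNIV. \<Sum>j<N k. \<bar>pmf (?p1 j) x - pmf (?p2 j) x\<bar>) / real (N k)"
    using N_k by (intro divide_right_mono sum_mono sum_abs) auto
  also have "\<dots> = (\<Sum>j<N k. l1pmf (?p1 j) (?p2 j)) / real (N k)"
    unfolding l1pmf_def by (subst sum.swap) (rule refl)
  also have "\<dots> \<le> (\<Sum>j<N k. LP * (l1K K ?\<mu> ?\<mu> + l1K K ?e ?\<nu>)) / real (N k)"
  proof (intro divide_right_mono sum_mono)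
    show "l1pmf (?p1 j) (?p2 j) \<le> LP * (l1K K ?\<mu> ?\<mu> + l1K K ?e ?\<nu>)" for j
      using P_lip k emp_PK[of s] emp_PK[of a] nuMF_in_PK[OF emp_PK[of s], of "pol t"] by blast
  qed simp
  also have "\<dots> = LP * l1K K ?e ?\<nu>"
    using N_k by (simp add: l1K_def)
  finally show ?thesis .
qed

text \<open>Triangle inequality through the conditional mean of the next empirical distribution given the
  actions, and through the same mean with the mean-field action distribution.\<close>
lemma expected_next_class_deviation_given_actions_le:
  assumes k: "k < K"
  shows "measure_pmf.expectation (next_pmf K N P s a)
      (\<lambda>s'. \<Sum>x\<in>UNIV. \<bar>emp K N s' x k - PMF P (pol t) (emp K N s) x k\<bar>)
    \<le> sqrt (real CARD('x)) / sqrt (real (N k)) + LP * l1K K (emp K N a) (nuMF (pol t) (emp K N s))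
      + (\<Sum>x\<in>UNIV. \<bar>(\<Sum>j<N k. pmf (P k (s (k, j)) (a (k, j)) (emp K N s) (nuMF (pol t) (emp K N s))) x) / real (N k)
          - PMF P (pol t) (emp K N s) x k\<bar>)"
proof -
  let ?\<mu> = "emp K N s" and ?\<nu> = "nuMF (pol t) (emp K N s)"
  define m where "m x = (\<Sum>j<N k. pmf (P k (s (k, j)) (a (k, j)) ?\<mu> (emp K N a)) x) / real (N k)" for x
  define m' where "m' x = (\<Sum>j<N k. pmf (P k (s (k, j)) (a (k, j)) ?\<mu> ?\<nu>) x) / real (N k)" for x
  define D where "D = (\<Sum>x\<in>UNIV. \<bar>m' x - PMF P (pol t) ?\<mu> x k\<bar>)"
  have triangle: "(\<Sum>x\<in>UNIV. \<bar>emp K N s' x k - PMF P (pol t) ?\<mu> x k\<bar>)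
      \<le> (\<Sum>x\<in>UNIV. \<bar>emp K N s' x k - m x\<bar>) + ((\<Sum>x\<in>UNIV. \<bar>m x - m' x\<bar>) + D)" for s'
    unfolding D_def sum.distrib[symmetric] by (rule sum_mono) linarith
  have "measure_pmf.expectation (next_pmf K N P s a)
      (\<lambda>s'. \<Sum>x\<in>UNIV. \<bar>emp K N s' x k - PMF P (pol t) ?\<mu> x k\<bar>)
    \<le> measure_pmf.expectation (next_pmf K N P s a)
      (\<lambda>s'. (\<Sum>x\<in>UNIV. \<bar>emp K N s' x k - m x\<bar>) + ((\<Sum>x\<in>UNIV. \<bar>m x - m' x\<bar>) + D))"
    by (intro expectation_mono_finite_pmf finite_set_next_pmf triangle)
  also have "\<dots> = measure_pmf.expectation (next_pmf K N P s a) (\<lambda>s'. \<Sum>x\<in>UNIV. \<bar>emp K N s' x k - m x\<bar>)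
      + ((\<Sum>x\<in>UNIV. \<bar>m x - m' x\<bar>) + D)"
    by simp
  also have "\<dots> \<le> sqrt (real CARD('x)) / sqrt (real (N k)) + (LP * l1K K (emp K N a) ?\<nu> + D)"
    using next_emp_deviation_le[OF k, of s a] next_mean_emp_nuMF_diff_le[OF k, of s a t]
    unfolding m_def m'_def by (intro add_mono) auto
  finally show ?thesis
    by (simp add: D_def m'_def)
qed

lemma expected_next_class_deviation_le:
  assumes k: "k < K"
  shows "measure_pmf.expectation (action_pmf K N pol t s)
     (\<lambda>a. measure_pmf.expectation (next_pmf K N P s a)
        (\<lambda>s'. \<Sum>x\<in>UNIV. \<bar>emp K N s' x k - PMF P (pol t) (emp K N s) x k\<bar>))
   \<le> 2 * (sqrt (real CARD('x)) / sqrt (real (N k)))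
      + LP * measure_pmf.expectation (action_pmf K N pol t s) (\<lambda>a. l1K K (emp K N a) (nuMF (pol t) (emp K N s)))"
proof -
  let ?A = "action_pmf K N pol t s" and ?\<mu> = "emp K N s" and ?\<nu> = "nuMF (pol t) (emp K N s)"
  let ?c = "sqrt (real CARD('x)) / sqrt (real (N k))"
  define D where "D a = (\<Sum>x\<in>UNIV. \<bar>(\<Sum>j<N k. pmf (P k (s (k, j)) (a (k, j)) ?\<mu> ?\<nu>) x) / real (N k)
      - PMF P (pol t) ?\<mu> x k\<bar>)" for a
  have "measure_pmf.expectation ?A
      (\<lambda>a. measure_pmf.expectation (next_pmf K N P s a) (\<lambda>s'. \<Sum>x\<in>UNIV. \<bar>emp K N s' x k - PMF P (pol t) ?\<mu> x k\<bar>))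
    \<le> measure_pmf.expectation ?A (\<lambda>a. ?c + LP * l1K K (emp K N a) ?\<nu> + D a)"
    unfolding D_def
    by (intro expectation_mono_finite_pmf finite_set_action_pmf expected_next_class_deviation_given_actions_le k)
  also have "\<dots> = ?c + LP * measure_pmf.expectation ?A (\<lambda>a. l1K K (emp K N a) ?\<nu>) + measure_pmf.expectation ?A D"
    by simp
  also have "measure_pmf.expectation ?A D \<le> ?c"
    unfolding D_def by (rule action_average_deviation_le[OF k])
  finally show ?thesis
    by simp
qed

lemma rMF_emp_eq_average:
  assumes "k < K"
  shows "rMF r (pol t) (emp K N s) k
       = (\<Sum>j<N k. measure_pmf.expectation (pol t k (s (k, j)) (emp K N s))
            (\<lambda>u. r k (s (k, j)) u (emp K N s) (nuMF (pol t) (emp K N s)))) / real (N k)"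
proof -
  let ?\<mu> = "emp K N s" and ?\<nu> = "nuMF (pol t) (emp K N s)"
  have "rMF r (pol t) ?\<mu> k = (\<Sum>x\<in>UNIV. ?\<mu> x k * (\<Sum>u\<in>UNIV. pmf (pol t k x ?\<mu>) u * r k x u ?\<mu> ?\<nu>))"
    unfolding rMF_def by (simp add: sum_distrib_left mult.assoc)
  also have "\<dots> = (\<Sum>j<N k. \<Sum>u\<in>UNIV. pmf (pol t k (s (k, j)) ?\<mu>) u * r k (s (k, j)) u ?\<mu> ?\<nu>) / real (N k)"
    by (rule sum_emp_mult[OF assms])
  finally show ?thesis
    by (simp add: expectation_finite_type)
qed

lemma expected_mf_reward_eq:
  "measure_pmf.expectation (action_pmf K N pol t s)
      (\<lambda>a. \<Sum>k<K. \<Sum>j<N k. r k (s (k, j)) (a (k, j)) (emp K N s) (nuMF (pol t) (emp K N s)))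
    = (\<Sum>k<K. real (N k) * rMF r (pol t) (emp K N s) k)"
proof -
  let ?\<mu> = "emp K N s" and ?\<nu> = "nuMF (pol t) (emp K N s)"
  have component: "measure_pmf.expectation (action_pmf K N pol t s) (\<lambda>a. r k (s (k, j)) (a (k, j)) ?\<mu> ?\<nu>)
      = measure_pmf.expectation (pol t k (s (k, j)) ?\<mu>) (\<lambda>u. r k (s (k, j)) u ?\<mu> ?\<nu>)"
    if "k < K" "j < N k" for k j
    using that unfolding action_pmf_def
    by (subst expectation_Pi_pmf_component[OF finite_agents]) (auto simp: agents_def)
  have "measure_pmf.expectation (action_pmf K N pol t s)
      (\<lambda>a. \<Sum>k<K. \<Sum>j<N k. r k (s (k, j)) (a (k, j)) ?\<mu> ?\<nu>)
    = (\<Sum>k<K. \<Sum>j<N k. measure_pmf.expectation (pol t k (s (k, j)) ?\<mu>) (\<lambda>u. r k (s (k, j)) u ?\<mu> ?\<nu>))"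
    by (simp add: Bochner_Integration.integral_sum component)
  also have "\<dots> = (\<Sum>k<K. real (N k) * rMF r (pol t) ?\<mu> k)"
    using N_pos by (intro sum.cong refl) (simp add: rMF_emp_eq_average Suc_le_eq)
  finally show ?thesis .
qed

lemma expected_stage_reward_diff_le:
  "\<bar>measure_pmf.expectation (action_pmf K N pol t s) (stage_reward K N r s)
      - (\<Sum>k<K. real (N k) * rMF r (pol t) (emp K N s) k)\<bar>
    \<le> real (Npop K N) * LR
       * measure_pmf.expectation (action_pmf K N pol t s) (\<lambda>a. l1K K (emp K N a) (nuMF (pol t) (emp K N s)))"
proof -
  let ?\<mu> = "emp K N s" and ?\<nu> = "nuMF (pol t) (emp K N s)"
  let ?A = "action_pmf K N pol t s"
  define G where "G a = (\<Sum>k<K. \<Sum>j<N k. r k (s (k, j)) (a (k, j)) ?\<mu> ?\<nu>)" for a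
  have G_diff: "\<bar>stage_reward K N r s a - G a\<bar> \<le> real (Npop K N) * LR * l1K K (emp K N a) ?\<nu>" for a
  proof -
    have "\<bar>stage_reward K N r s a - G a\<bar>
        \<le> (\<Sum>k<K. \<Sum>j<N k. \<bar>r k (s (k, j)) (a (k, j)) ?\<mu> (emp K N a) - r k (s (k, j)) (a (k, j)) ?\<mu> ?\<nu>\<bar>)"
      unfolding stage_reward_def G_def sum_subtractf[symmetric]
      by (rule order_trans[OF sum_abs], rule sum_mono, rule sum_abs)
    also have "\<dots> \<le> (\<Sum>k<K. \<Sum>j<N k. LR * l1K K (emp K N a) ?\<nu>)"
    proof (intro sum_mono)
      fix k j
      assume "k \<in> {..<K}"
      then show "\<bar>r k (s (k, j)) (a (k, j)) ?\<mu> (emp K N a) - r k (s (k, j)) (a (k, j)) ?\<mu> ?\<nu>\<bar>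
          \<le> LR * l1K K (emp K N a) ?\<nu>"
        using r_lip[rule_format, of k ?\<mu> ?\<mu> "emp K N a" ?\<nu> "s (k, j)" "a (k, j)"]
          nuMF_in_PK[OF emp_PK[of s], of "pol t"] by simp
    qed
    also have "\<dots> = real (Npop K N) * LR * l1K K (emp K N a) ?\<nu>"
      unfolding Npop_def by (simp add: sum_distrib_right mult.assoc)
    finally show ?thesis .
  qed
  have "\<bar>measure_pmf.expectation ?A (stage_reward K N r s) - measure_pmf.expectation ?A G\<bar>
      \<le> measure_pmf.expectation ?A (\<lambda>a. \<bar>stage_reward K N r s a - G a\<bar>)"
    using integral_abs_bound[of ?A "\<lambda>a. stage_reward K N r s a - G a"] by simp
  also have "\<dots> \<le> measure_pmf.expectation ?A (\<lambda>a. real (Npop K N) * LR * l1K K (emp K N a) ?\<nu>)"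
    by (rule expectation_mono_finite_pmf[OF finite_set_action_pmf G_diff])
  finally show ?thesis
    unfolding G_def expected_mf_reward_eq by simp
qed

end

section \<open>Propagation of the distance to the mean-field flow\<close>

definition wdist :: "nat \<Rightarrow> (nat \<Rightarrow> real) \<Rightarrow> ('a::finite \<Rightarrow> nat \<Rightarrow> real) \<Rightarrow> ('a \<Rightarrow> nat \<Rightarrow> real) \<Rightarrow> real" where
  "wdist K w \<mu>1 \<mu>2 = (\<Sum>k<K. w k * (\<Sum>x\<in>UNIV. \<bar>\<mu>1 x k - \<mu>2 x k\<bar>))"

lemma wdist_triangle:
  assumes "\<And>k. 0 \<le> w k"
  shows "wdist K w \<mu>1 \<mu>3 \<le> wdist K w \<mu>1 \<mu>2 + wdist K w \<mu>2 \<mu>3"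
proof -
  have "w k * (\<Sum>x\<in>UNIV. \<bar>\<mu>1 x k - \<mu>3 x k\<bar>)
      \<le> w k * (\<Sum>x\<in>UNIV. \<bar>\<mu>1 x k - \<mu>2 x k\<bar>) + w k * (\<Sum>x\<in>UNIV. \<bar>\<mu>2 x k - \<mu>3 x k\<bar>)" for k
    unfolding distrib_left[symmetric] sum.distrib[symmetric]
    by (intro mult_left_mono sum_mono assms) linarith
  then show ?thesis
    unfolding wdist_def sum.distrib[symmetric] by (rule sum_mono)
qed

lemma wdist_nonneg: "(\<And>k. 0 \<le> w k) \<Longrightarrow> 0 \<le> wdist K w \<mu>1 \<mu>2"
  unfolding wdist_def by (intro sum_nonneg mult_nonneg_nonneg) (auto intro: sum_nonneg)

lemma l1K_le_wdist:
  assumes "\<And>k. k < K \<Longrightarrow> 1 \<le> c * w k"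
  shows "l1K K \<mu>1 \<mu>2 \<le> c * wdist K w \<mu>1 \<mu>2"
  unfolding l1K_def wdist_def sum_distrib_left[where r=c]
proof (rule sum_mono)
  fix k
  assume "k \<in> {..<K}"
  then have "1 * (\<Sum>x\<in>UNIV. \<bar>\<mu>1 x k - \<mu>2 x k\<bar>) \<le> (c * w k) * (\<Sum>x\<in>UNIV. \<bar>\<mu>1 x k - \<mu>2 x k\<bar>)"
    using assms by (intro mult_right_mono) (auto simp: sum_nonneg)
  then show "(\<Sum>x\<in>UNIV. \<bar>\<mu>1 x k - \<mu>2 x k\<bar>) \<le> c * (w k * (\<Sum>x\<in>UNIV. \<bar>\<mu>1 x k - \<mu>2 x k\<bar>))"
    by (simp add: mult.assoc)
qed

context mf_model
begin

lemma wdist_PMF_le: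
  assumes "\<mu>1 \<in> PK K" "\<mu>2 \<in> PK K" "\<And>k. 0 \<le> w k"
  shows "wdist K w (PMF P (pol t) \<mu>1) (PMF P (pol t) \<mu>2)
      \<le> wdist K w \<mu>1 \<mu>2 + (\<Sum>k<K. w k) * PMF_lip * l1K K \<mu>1 \<mu>2"
proof -
  have "wdist K w (PMF P (pol t) \<mu>1) (PMF P (pol t) \<mu>2)
     \<le> (\<Sum>k<K. w k * ((\<Sum>x\<in>UNIV. \<bar>\<mu>1 x k - \<mu>2 x k\<bar>) + PMF_lip * l1K K \<mu>1 \<mu>2))"
    unfolding wdist_def by (intro sum_mono mult_left_mono PMF_class_l1_le assms) simp_all
  then show ?thesis
    unfolding wdist_def by (simp add: distrib_left sum.distrib sum_distrib_right mult.assoc)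
qed

lemma expected_wdist_step_le:
  assumes w: "\<And>k. 0 \<le> w k" and \<mu>: "\<mu> \<in> PK K"
  shows "measure_pmf.expectation (action_pmf K N pol t s)
      (\<lambda>a. measure_pmf.expectation (next_pmf K N P s a) (\<lambda>s'. wdist K w (emp K N s') (PMF P (pol t) \<mu>)))
    \<le> (\<Sum>k<K. w k * (2 * (sqrt (real CARD('x)) / sqrt (real (N k)))))
      + (\<Sum>k<K. w k) * LP * (sqrt (real CARD('u)) * (\<Sum>k<K. 1 / sqrt (real (N k))))
      + wdist K w (emp K N s) \<mu> + (\<Sum>k<K. w k) * PMF_lip * l1K K (emp K N s) \<mu>"
proof -
  let ?A = "action_pmf K N pol t s" and ?\<nu> = "nuMF (pol t) (emp K N s)"
  let ?dev = "\<lambda>s' k. \<Sum>x\<in>UNIV. \<bar>emp K N s' x k - PMF P (pol t) (emp K N s) x k\<bar>"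
  have w_sum: "0 \<le> (\<Sum>k<K. w k)"
    by (intro sum_nonneg w)
  have "measure_pmf.expectation ?A
      (\<lambda>a. measure_pmf.expectation (next_pmf K N P s a) (\<lambda>s'. wdist K w (emp K N s') (PMF P (pol t) \<mu>)))
    \<le> measure_pmf.expectation ?A (\<lambda>a. measure_pmf.expectation (next_pmf K N P s a)
         (\<lambda>s'. wdist K w (emp K N s') (PMF P (pol t) (emp K N s))
             + wdist K w (PMF P (pol t) (emp K N s)) (PMF P (pol t) \<mu>)))"
    by (intro expectation_mono_finite_pmf finite_set_action_pmf finite_set_next_pmf wdist_triangle w)
  also have "\<dots> = (\<Sum>k<K. w k * measure_pmf.expectation ?A
         (\<lambda>a. measure_pmf.expectation (next_pmf K N P s a) (\<lambda>s'. ?dev s' k)))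
      + wdist K w (PMF P (pol t) (emp K N s)) (PMF P (pol t) \<mu>)"
    by (simp add: wdist_def Bochner_Integration.integral_sum)
  also have "\<dots> \<le> (\<Sum>k<K. w k * (2 * (sqrt (real CARD('x)) / sqrt (real (N k)))
         + LP * measure_pmf.expectation ?A (\<lambda>a. l1K K (emp K N a) ?\<nu>)))
      + (wdist K w (emp K N s) \<mu> + (\<Sum>k<K. w k) * PMF_lip * l1K K (emp K N s) \<mu>)"
    by (intro add_mono sum_mono mult_left_mono expected_next_class_deviation_le wdist_PMF_le \<mu> w) auto
  also have "(\<Sum>k<K. w k * (2 * (sqrt (real CARD('x)) / sqrt (real (N k)))
         + LP * measure_pmf.expectation ?A (\<lambda>a. l1K K (emp K N a) ?\<nu>)))
      \<le> (\<Sum>k<K. w k * (2 * (sqrt (real CARD('x)) / sqrt (real (N k)))))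
         + (\<Sum>k<K. w k) * LP * (sqrt (real CARD('u)) * (\<Sum>k<K. 1 / sqrt (real (N k))))"
    using mult_left_mono[OF expected_action_l1K_le[of t s] mult_nonneg_nonneg[OF w_sum consts_nonneg(3)]]
    by (simp add: distrib_left sum.distrib sum_distrib_right mult.assoc)
  finally show ?thesis
    by simp
qed

end

section \<open>Discounted sums\<close>

lemma summable_discounted_bounded:
  fixes f :: "nat \<Rightarrow> real"
  assumes "0 \<le> \<gamma>" "\<gamma> < 1" "\<And>t. \<bar>f t\<bar> \<le> B"
  shows "summable (\<lambda>t. \<gamma> ^ t * f t)"
proof (rule summable_comparison_test)
  have "norm (\<gamma> ^ t * f t) \<le> B * \<gamma> ^ t" for t
    using mult_right_mono[OF assms(3)[of t] zero_le_power[OF assms(1)]] assms(1)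
    by (simp add: abs_mult mult.commute)
  then show "\<exists>M. \<forall>t\<ge>M. norm (\<gamma> ^ t * f t) \<le> B * \<gamma> ^ t"
    by blast
  show "summable (\<lambda>t. B * \<gamma> ^ t)"
    using assms by (intro summable_mult summable_geometric) simp
qed

text \<open>Summing \<open>\<gamma>\<^sup>t\<close> against the geometric sums \<open>(\<rho>\<^sup>t - 1) / (\<rho> - 1)\<close> gives the difference of two
  geometric series.\<close>
lemma discounted_sum_abs_le:
  fixes e :: "nat \<Rightarrow> real"
  assumes \<gamma>: "0 \<le> \<gamma>" "\<gamma> < 1" and \<rho>: "1 < \<rho>" "\<gamma> * \<rho> < 1"
    and e_bound: "\<And>t. \<bar>e t\<bar> \<le> c1 + c2 * (\<Sum>i<t. \<rho> ^ i)"
    and sums: "(\<lambda>t. \<gamma> ^ t * e t) sums v"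
  shows "\<bar>v\<bar> \<le> c1 / (1 - \<gamma>) + c2 / (\<rho> - 1) * (1 / (1 - \<gamma> * \<rho>) - 1 / (1 - \<gamma>))"
proof -
  define g where "g t = \<gamma> ^ t * (c1 + c2 * (\<Sum>i<t. \<rho> ^ i))" for t
  have g_eq: "g t = c1 * \<gamma> ^ t + c2 / (\<rho> - 1) * ((\<gamma> * \<rho>) ^ t - \<gamma> ^ t)" for t
  proof -
    have "(\<Sum>i<t. \<rho> ^ i) = (\<rho> ^ t - 1) / (\<rho> - 1)"
      using \<rho> by (simp add: sum_gp_strict) (simp add: field_simps)
    then have "g t = \<gamma> ^ t * (c1 + c2 * ((\<rho> ^ t - 1) / (\<rho> - 1)))"
      unfolding g_def by simp
    also have "\<dots> = c1 * \<gamma> ^ t + c2 / (\<rho> - 1) * ((\<gamma> * \<rho>) ^ t - \<gamma> ^ t)"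
      using \<rho> by (simp add: power_mult_distrib divide_simps) (simp add: algebra_simps)
    finally show ?thesis .
  qed
  have geom_\<gamma>: "(\<lambda>t. \<gamma> ^ t) sums (1 / (1 - \<gamma>))"
    by (rule geometric_sums) (use \<gamma> in simp)
  have geom_\<gamma>\<rho>: "(\<lambda>t. (\<gamma> * \<rho>) ^ t) sums (1 / (1 - \<gamma> * \<rho>))"
    by (rule geometric_sums) (use \<gamma> \<rho> in \<open>simp add: abs_mult\<close>)
  have g_sums: "g sums (c1 / (1 - \<gamma>) + c2 / (\<rho> - 1) * (1 / (1 - \<gamma> * \<rho>) - 1 / (1 - \<gamma>)))"
    unfolding g_eq
    using sums_add[OF sums_mult[OF geom_\<gamma>, of c1] sums_mult[OF sums_diff[OF geom_\<gamma>\<rho> geom_\<gamma>], of "c2 / (\<rho> - 1)"]]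
    by simp
  have term_le: "\<bar>\<gamma> ^ t * e t\<bar> \<le> g t" for t
    unfolding g_def using e_bound[of t] \<gamma> by (simp add: abs_mult mult_left_mono)
  have abs_summable: "summable (\<lambda>t. \<bar>\<gamma> ^ t * e t\<bar>)"
    by (rule summable_comparison_test[OF _ sums_summable[OF g_sums]]) (use term_le in auto)
  have "\<bar>v\<bar> \<le> (\<Sum>t. \<bar>\<gamma> ^ t * e t\<bar>)"
    using summable_rabs[OF abs_summable] sums by (simp add: sums_unique[symmetric])
  also have "\<dots> \<le> suminf g"
    by (rule suminf_le[OF term_le abs_summable sums_summable[OF g_sums]])
  finally show ?thesis
    using g_sums by (simp add: sums_unique[symmetric])
qed

section \<open>The N-agent system against the mean-field flow\<close>

text \<open>\<open>T\<close> bounds the inverse population shares \<open>1 / \<theta> k\<close>; the theorem takes their maximum.\<close>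
locale mf_population = mf_model K N MR LR LP LQ P r pol
  for K N MR LR LP LQ
    and P :: "nat \<Rightarrow> 'x::finite \<Rightarrow> 'u::finite \<Rightarrow> ('x \<Rightarrow> nat \<Rightarrow> real) \<Rightarrow> ('u \<Rightarrow> nat \<Rightarrow> real) \<Rightarrow> 'x pmf"
    and r pol +
  fixes T :: real and x0 :: "nat \<times> nat \<Rightarrow> 'x"
  assumes K_pos: "1 \<le> K" and T_bound: "\<forall>k<K. real (Npop K N) \<le> T * real (N k)"
begin

definition \<theta> :: "nat \<Rightarrow> real" where
  "\<theta> k = real (N k) / real (Npop K N)"

definition sample_rate :: real where
  "sample_rate = (\<Sum>k<K. sqrt (real (N k))) / real (Npop K N)"

definition CR :: real where "CR = MR + LR * T"
definition CP :: real where "CP = 2 + LP * T"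
definition SR :: real where "SR = MR * (1 + LQ * T) + LR * T * (2 + LQ * T)"
definition SP :: real where "SP = (1 + LQ * T) + LP * T * (2 + LQ * T)"

definition step_err :: real where
  "step_err = CP * sqrt (real CARD('x) * real CARD('u)) * sample_rate"

abbreviation mf_flow :: "nat \<Rightarrow> 'x \<Rightarrow> nat \<Rightarrow> real" where
  "mf_flow \<equiv> mu_traj P pol (emp K N x0)"

definition dist_mf :: "nat \<Rightarrow> real" where
  "dist_mf t = measure_pmf.expectation (state_dist K N pol P x0 t) (\<lambda>s. wdist K \<theta> (emp K N s) (mf_flow t))"

definition reward_gap :: "nat \<Rightarrow> real" where
  "reward_gap t =
     measure_pmf.expectation (sa_dist K N pol P x0 t) (\<lambda>(s, a). stage_reward K N r s a) / real (Npop K N)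
     - (\<Sum>k<K. \<theta> k * rMF r (pol t) (mf_flow t) k)"

lemma mf_flow_PK: "mf_flow t \<in> PK K"
  by (rule mu_traj_in_PK[OF emp_PK])

lemma N_k_pos: "k < K \<Longrightarrow> 0 < real (N k)"
  using N_pos by force

lemma Npop_pos: "0 < real (Npop K N)"
proof -
  have "N 0 \<le> Npop K N"
    unfolding Npop_def by (rule member_le_sum) (use K_pos in auto)
  then show ?thesis
    using N_k_pos[of 0] K_pos by simp
qed

lemma \<theta>_nonneg: "0 \<le> \<theta> k"
  by (simp add: \<theta>_def)

lemma sum_\<theta>: "(\<Sum>k<K. \<theta> k) = 1"
  using Npop_pos unfolding \<theta>_def Npop_def by (simp add: sum_divide_distrib[symmetric])

lemma one_le_T_\<theta>: "k < K \<Longrightarrow> 1 \<le> T * \<theta> k"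
  using T_bound Npop_pos unfolding \<theta>_def by (simp add: field_simps)

lemma K_le_T: "real K \<le> T"
proof -
  have "real K = (\<Sum>k<K. 1)"
    by simp
  also have "\<dots> \<le> (\<Sum>k<K. T * \<theta> k)"
    by (intro sum_mono one_le_T_\<theta>) simp
  also have "\<dots> = T"
    by (simp add: sum_distrib_left[symmetric] sum_\<theta>)
  finally show ?thesis .
qed

lemma T_pos: "0 < T"
  using K_le_T K_pos by linarith

lemma sum_\<theta>_inv_sqrt: "(\<Sum>k<K. \<theta> k * (c / sqrt (real (N k)))) = c * sample_rate"
proof -
  have "\<theta> k * (c / sqrt (real (N k))) = c * (real (N k) / sqrt (real (N k))) / real (Npop K N)" for k
    unfolding \<theta>_def by (simp add: field_simps)
  also have "\<dots> k = c * sqrt (real (N k)) / real (Npop K N)" for k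
    by (simp add: real_div_sqrt)
  finally have "\<theta> k * (c / sqrt (real (N k))) = c * sqrt (real (N k)) / real (Npop K N)" for k .
  then show ?thesis
    unfolding sample_rate_def by (simp add: sum_divide_distrib sum_distrib_left)
qed

lemma sample_rate_nonneg: "0 \<le> sample_rate"
  unfolding sample_rate_def by (simp add: sum_nonneg)

lemma sum_inv_sqrt_le: "(\<Sum>k<K. 1 / sqrt (real (N k))) \<le> T * sample_rate"
proof -
  have "(\<Sum>k<K. 1 / sqrt (real (N k))) \<le> (\<Sum>k<K. T * \<theta> k / sqrt (real (N k)))"
    using one_le_T_\<theta> by (intro sum_mono divide_right_mono) auto
  also have "\<dots> = T * sample_rate"
    by (simp add: sum_\<theta>_inv_sqrt[of T, symmetric] mult.commute)
  finally show ?thesis .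
qed

lemma l1K_le_T_wdist: "l1K K \<mu>1 \<mu>2 \<le> T * wdist K \<theta> \<mu>1 \<mu>2"
  by (rule l1K_le_wdist) (rule one_le_T_\<theta>)

lemma SP_eq: "SP = 1 + T * (LQ + LP * (2 + T * LQ))"
  unfolding SP_def by (simp add: algebra_simps)

lemma T_PMF_lip_le: "T * PMF_lip \<le> SP - 1"
proof -
  have "real K * LQ \<le> T * LQ"
    using K_le_T consts_nonneg by (intro mult_right_mono) auto
  then have "PMF_lip \<le> LQ + LP * (2 + T * LQ)"
    unfolding PMF_lip_def using consts_nonneg by (intro add_mono mult_left_mono) auto
  then show ?thesis
    unfolding SP_eq using T_pos by (simp add: mult_left_mono)
qed

lemma MR_T_rMF_lip_le: "MR + T * rMF_lip \<le> SR"
proof -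
  have "real K * LQ \<le> T * LQ"
    using K_le_T consts_nonneg by (intro mult_right_mono) auto
  then have "rMF_lip \<le> MR * LQ + LR * (2 + T * LQ)"
    unfolding rMF_lip_def using consts_nonneg by (intro add_mono mult_left_mono) auto
  then have "MR + T * rMF_lip \<le> MR + T * (MR * LQ + LR * (2 + T * LQ))"
    using T_pos by (simp add: mult_left_mono)
  also have "\<dots> = SR"
    unfolding SR_def by (simp add: algebra_simps)
  finally show ?thesis .
qed

lemma dist_mf_0: "dist_mf 0 = 0"
  by (simp add: dist_mf_def wdist_def)

lemma mean_field_step_err_le:
  "(\<Sum>k<K. \<theta> k * (2 * (sqrt (real CARD('x)) / sqrt (real (N k)))))
     + (\<Sum>k<K. \<theta> k) * LP * (sqrt (real CARD('u)) * (\<Sum>k<K. 1 / sqrt (real (N k))))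
   \<le> step_err"
proof -
  let ?X = "real CARD('x)" and ?U = "real CARD('u)"
  have X_le: "sqrt ?X \<le> sqrt (?X * ?U)" and U_le: "sqrt ?U \<le> sqrt (?X * ?U)"
    by (simp_all add: Suc_le_eq)
  have "(\<Sum>k<K. \<theta> k * (2 * (sqrt ?X / sqrt (real (N k))))) = 2 * sqrt ?X * sample_rate"
    using sum_\<theta>_inv_sqrt[of "2 * sqrt ?X"] by (simp add: mult.assoc)
  also have "\<dots> \<le> 2 * sqrt (?X * ?U) * sample_rate"
    using X_le sample_rate_nonneg by (intro mult_right_mono) auto
  finally have first: "(\<Sum>k<K. \<theta> k * (2 * (sqrt ?X / sqrt (real (N k))))) \<le> 2 * sqrt (?X * ?U) * sample_rate" .
  have "LP * (sqrt ?U * (\<Sum>k<K. 1 / sqrt (real (N k)))) \<le> LP * (sqrt (?X * ?U) * (T * sample_rate))"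
    using U_le sum_inv_sqrt_le consts_nonneg(3) T_pos sample_rate_nonneg
    by (intro mult_left_mono mult_mono) (auto simp: sum_nonneg)
  then show ?thesis
    using first unfolding step_err_def CP_def sum_\<theta> by (simp add: algebra_simps)
qed

lemma dist_mf_Suc_le: "dist_mf (Suc t) \<le> step_err + SP * dist_mf t"
proof -
  let ?S = "state_dist K N pol P x0 t"
  have step: "measure_pmf.expectation (action_pmf K N pol t s)
      (\<lambda>a. measure_pmf.expectation (next_pmf K N P s a) (\<lambda>s'. wdist K \<theta> (emp K N s') (PMF P (pol t) (mf_flow t))))
    \<le> step_err + SP * wdist K \<theta> (emp K N s) (mf_flow t)" for s
  proof -
    have "PMF_lip * l1K K (emp K N s) (mf_flow t) \<le> PMF_lip * (T * wdist K \<theta> (emp K N s) (mf_flow t))"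
      using consts_nonneg by (intro mult_left_mono l1K_le_T_wdist) (simp add: PMF_lip_def)
    also have "\<dots> \<le> (SP - 1) * wdist K \<theta> (emp K N s) (mf_flow t)"
      using mult_right_mono[OF T_PMF_lip_le wdist_nonneg[OF \<theta>_nonneg]] by (simp add: mult_ac)
    finally have lip: "PMF_lip * l1K K (emp K N s) (mf_flow t) \<le> (SP - 1) * wdist K \<theta> (emp K N s) (mf_flow t)" .
    have "measure_pmf.expectation (action_pmf K N pol t s)
        (\<lambda>a. measure_pmf.expectation (next_pmf K N P s a) (\<lambda>s'. wdist K \<theta> (emp K N s') (PMF P (pol t) (mf_flow t))))
      \<le> (\<Sum>k<K. \<theta> k * (2 * (sqrt (real CARD('x)) / sqrt (real (N k)))))
        + (\<Sum>k<K. \<theta> k) * LP * (sqrt (real CARD('u)) * (\<Sum>k<K. 1 / sqrt (real (N k))))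
        + wdist K \<theta> (emp K N s) (mf_flow t) + (\<Sum>k<K. \<theta> k) * PMF_lip * l1K K (emp K N s) (mf_flow t)"
      by (rule expected_wdist_step_le[where w=\<theta>, OF \<theta>_nonneg mf_flow_PK])
    also have "\<dots> \<le> step_err + SP * wdist K \<theta> (emp K N s) (mf_flow t)"
      using mean_field_step_err_le lip unfolding sum_\<theta> by (simp add: algebra_simps)
    finally show ?thesis .
  qed
  have "dist_mf (Suc t) = measure_pmf.expectation ?S (\<lambda>s. measure_pmf.expectation (action_pmf K N pol t s)
      (\<lambda>a. measure_pmf.expectation (next_pmf K N P s a) (\<lambda>s'. wdist K \<theta> (emp K N s') (PMF P (pol t) (mf_flow t)))))"
    unfolding dist_mf_def by (simp add: expectation_bind_pmf_finite set_bind_pmf)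
  also have "\<dots> \<le> measure_pmf.expectation ?S (\<lambda>s. step_err + SP * wdist K \<theta> (emp K N s) (mf_flow t))"
    by (rule expectation_mono_finite_pmf[OF finite_set_state_dist step])
  also have "\<dots> = step_err + SP * dist_mf t"
    by (simp add: dist_mf_def)
  finally show ?thesis .
qed

lemma one_le_SP: "1 \<le> SP"
proof -
  have "0 \<le> T * (LQ + LP * (2 + T * LQ))"
    using T_pos consts_nonneg by (intro mult_nonneg_nonneg add_nonneg_nonneg) auto
  then show ?thesis
    by (simp add: SP_eq)
qed

lemma dist_mf_le: "dist_mf t \<le> step_err * (\<Sum>i<t. SP ^ i)"
proof (induction t)
  case (Suc t)
  have "dist_mf (Suc t) \<le> step_err + SP * (step_err * (\<Sum>i<t. SP ^ i))"
    using dist_mf_Suc_le[of t] mult_left_mono[OF Suc.IH, of SP] one_le_SP by linarith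
  then show ?case
    by (simp add: sum.lessThan_Suc_shift sum_distrib_left algebra_simps del: sum.lessThan_Suc)
qed (simp add: dist_mf_0)

lemma \<theta>_rMF_diff_le:
  assumes "\<mu>1 \<in> PK K" "\<mu>2 \<in> PK K"
  shows "\<bar>(\<Sum>k<K. \<theta> k * rMF r (pol t) \<mu>1 k) - (\<Sum>k<K. \<theta> k * rMF r (pol t) \<mu>2 k)\<bar>
      \<le> SR * wdist K \<theta> \<mu>1 \<mu>2"
proof -
  have lip_nonneg: "0 \<le> rMF_lip"
    using consts_nonneg by (simp add: rMF_lip_def)
  have "\<bar>(\<Sum>k<K. \<theta> k * rMF r (pol t) \<mu>1 k) - (\<Sum>k<K. \<theta> k * rMF r (pol t) \<mu>2 k)\<bar>
      \<le> (\<Sum>k<K. \<theta> k * \<bar>rMF r (pol t) \<mu>1 k - rMF r (pol t) \<mu>2 k\<bar>)"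
    unfolding sum_subtractf[symmetric] right_diff_distrib[symmetric]
    by (rule order_trans[OF sum_abs]) (simp add: abs_mult \<theta>_nonneg)
  also have "\<dots> \<le> (\<Sum>k<K. \<theta> k * (MR * (\<Sum>x\<in>UNIV. \<bar>\<mu>1 x k - \<mu>2 x k\<bar>) + rMF_lip * l1K K \<mu>1 \<mu>2))"
    using assms by (intro sum_mono mult_left_mono rMF_class_diff_le \<theta>_nonneg) auto
  also have "\<dots> = MR * (\<Sum>k<K. \<theta> k * (\<Sum>x\<in>UNIV. \<bar>\<mu>1 x k - \<mu>2 x k\<bar>)) + (\<Sum>k<K. \<theta> k) * (rMF_lip * l1K K \<mu>1 \<mu>2)"
    by (simp add: sum.distrib sum_distrib_left sum_distrib_right distrib_left mult_ac)
  also have "\<dots> = MR * wdist K \<theta> \<mu>1 \<mu>2 + rMF_lip * l1K K \<mu>1 \<mu>2"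
    by (simp add: wdist_def sum_\<theta>)
  also have "\<dots> \<le> MR * wdist K \<theta> \<mu>1 \<mu>2 + rMF_lip * (T * wdist K \<theta> \<mu>1 \<mu>2)"
    using lip_nonneg by (intro add_left_mono mult_left_mono l1K_le_T_wdist)
  also have "\<dots> = (MR + T * rMF_lip) * wdist K \<theta> \<mu>1 \<mu>2"
    by (simp add: algebra_simps)
  also have "\<dots> \<le> SR * wdist K \<theta> \<mu>1 \<mu>2"
    by (rule mult_right_mono[OF MR_T_rMF_lip_le wdist_nonneg[OF \<theta>_nonneg]])
  finally show ?thesis .
qed

lemma expected_reward_emp_diff_le:
  "\<bar>measure_pmf.expectation (action_pmf K N pol t s) (stage_reward K N r s) / real (Npop K N)
      - (\<Sum>k<K. \<theta> k * rMF r (pol t) (emp K N s) k)\<bar>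
    \<le> LR * T * sqrt (real CARD('u)) * sample_rate"
proof -
  let ?E = "measure_pmf.expectation (action_pmf K N pol t s) (\<lambda>a. l1K K (emp K N a) (nuMF (pol t) (emp K N s)))"
  have "(\<Sum>k<K. \<theta> k * rMF r (pol t) (emp K N s) k) = (\<Sum>k<K. real (N k) * rMF r (pol t) (emp K N s) k) / real (Npop K N)"
    unfolding \<theta>_def by (simp add: sum_divide_distrib)
  then have "\<bar>measure_pmf.expectation (action_pmf K N pol t s) (stage_reward K N r s) / real (Npop K N)
      - (\<Sum>k<K. \<theta> k * rMF r (pol t) (emp K N s) k)\<bar>
    = \<bar>measure_pmf.expectation (action_pmf K N pol t s) (stage_reward K N r s)
      - (\<Sum>k<K. real (N k) * rMF r (pol t) (emp K N s) k)\<bar> / real (Npop K N)"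
    using Npop_pos by (simp add: diff_divide_distrib[symmetric])
  also have "\<dots> \<le> real (Npop K N) * LR * ?E / real (Npop K N)"
    using Npop_pos by (intro divide_right_mono expected_stage_reward_diff_le) auto
  also have "\<dots> = LR * ?E"
    using Npop_pos by simp
  also have "\<dots> \<le> LR * (sqrt (real CARD('u)) * (T * sample_rate))"
    by (intro mult_left_mono consts_nonneg order_trans[OF expected_action_l1K_le mult_left_mono[OF sum_inv_sqrt_le]])
       simp
  finally show ?thesis
    by (simp add: mult_ac)
qed

lemma reward_gap_abs_le: "\<bar>reward_gap t\<bar> \<le> CR * sqrt (real CARD('u)) * sample_rate + SR * dist_mf t"
proof -
  let ?S = "state_dist K N pol P x0 t"
  define R where "R s = measure_pmf.expectation (action_pmf K N pol t s) (stage_reward K N r s) / real (Npop K N)" for s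
  define B where "B \<mu> = (\<Sum>k<K. \<theta> k * rMF r (pol t) \<mu> k)" for \<mu>
  have pointwise: "\<bar>R s - B (mf_flow t)\<bar>
      \<le> LR * T * sqrt (real CARD('u)) * sample_rate + SR * wdist K \<theta> (emp K N s) (mf_flow t)" for s
    using expected_reward_emp_diff_le[of t s] \<theta>_rMF_diff_le[OF emp_PK[of s] mf_flow_PK[of t], of t]
    unfolding R_def B_def by linarith
  have "measure_pmf.expectation (sa_dist K N pol P x0 t) (\<lambda>(s, a). stage_reward K N r s a)
      = measure_pmf.expectation ?S (\<lambda>s. measure_pmf.expectation (action_pmf K N pol t s) (stage_reward K N r s))"
    unfolding sa_dist_def by (subst expectation_bind_pmf_finite) auto
  then have gap_eq: "reward_gap t = measure_pmf.expectation ?S (\<lambda>s. R s - B (mf_flow t))"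
    unfolding reward_gap_def R_def B_def by simp
  have "\<bar>reward_gap t\<bar> \<le> measure_pmf.expectation ?S (\<lambda>s. \<bar>R s - B (mf_flow t)\<bar>)"
    unfolding gap_eq by (rule integral_abs_bound)
  also have "\<dots> \<le> measure_pmf.expectation ?S
      (\<lambda>s. LR * T * sqrt (real CARD('u)) * sample_rate + SR * wdist K \<theta> (emp K N s) (mf_flow t))"
    by (rule expectation_mono_finite_pmf[OF finite_set_state_dist pointwise])
  also have "\<dots> = LR * T * sqrt (real CARD('u)) * sample_rate + SR * dist_mf t"
    by (simp add: dist_mf_def)
  also have "\<dots> \<le> CR * sqrt (real CARD('u)) * sample_rate + SR * dist_mf t"
    using consts_nonneg sample_rate_nonneg unfolding CR_def by (intro add_right_mono mult_right_mono) auto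
  finally show ?thesis .
qed

lemma value_gap_sums:
  assumes "0 \<le> \<gamma>" "\<gamma> < 1"
  shows "(\<lambda>t. \<gamma> ^ t * reward_gap t) sums (vN K N \<gamma> pol P r x0 - vMF K N \<gamma> P r pol (emp K N x0))"
proof -
  define A where "A t = measure_pmf.expectation (sa_dist K N pol P x0 t) (\<lambda>(s, a). stage_reward K N r s a)" for t
  have A_bound: "\<bar>A t\<bar> \<le> real (Npop K N) * MR" for t
  proof -
    have "\<bar>A t\<bar> \<le> measure_pmf.expectation (sa_dist K N pol P x0 t) (\<lambda>(s, a). \<bar>stage_reward K N r s a\<bar>)"
      unfolding A_def using integral_abs_bound by (simp add: case_prod_unfold)
    also have "\<dots> \<le> measure_pmf.expectation (sa_dist K N pol P x0 t) (\<lambda>_. real (Npop K N) * MR)"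
      by (rule expectation_mono_finite_pmf[OF finite_set_sa_dist]) (auto simp: stage_reward_abs_le)
    finally show ?thesis
      by simp
  qed
  have N_sums: "(\<lambda>t. \<gamma> ^ t * A t / real (Npop K N)) sums vN K N \<gamma> pol P r x0"
    using sums_divide[OF summable_sums[OF summable_discounted_bounded[OF assms A_bound]], where c="real (Npop K N)"]
    unfolding vN_def A_def by simp
  have MF_sums: "(\<lambda>t. \<Sum>k<K. \<theta> k * (\<gamma> ^ t * rMF r (pol t) (mf_flow t) k)) sums vMF K N \<gamma> P r pol (emp K N x0)"
    unfolding vMF_def \<theta>_def
    by (intro sums_sum sums_mult summable_sums summable_discounted_bounded[OF assms, where B=MR] rMF_abs_le mf_flow_PK)
       simp
  have "(\<lambda>t. \<gamma> ^ t * reward_gap t)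
      = (\<lambda>t. \<gamma> ^ t * A t / real (Npop K N) - (\<Sum>k<K. \<theta> k * (\<gamma> ^ t * rMF r (pol t) (mf_flow t) k)))"
    unfolding reward_gap_def A_def by (simp add: algebra_simps sum_distrib_left)
  then show ?thesis
    using sums_diff[OF N_sums MF_sums] by simp
qed

lemma value_gap_le:
  assumes \<gamma>: "0 \<le> \<gamma>" "\<gamma> < 1" and LP_pos: "0 < LP" and contraction: "\<gamma> * SP < 1"
  shows "\<bar>vN K N \<gamma> pol P r x0 - vMF K N \<gamma> P r pol (emp K N x0)\<bar>
    \<le> CR / (1 - \<gamma>) * sqrt (real CARD('u)) * (1 / real (Npop K N)) * (\<Sum>k<K. sqrt (real (N k)))
     + CP * (SR / (SP - 1)) * sqrt (real CARD('x) * real CARD('u))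
       * (1 / real (Npop K N)) * (\<Sum>k<K. sqrt (real (N k)))
       * (1 / (1 - \<gamma> * SP) - 1 / (1 - \<gamma>))"
proof -
  have "0 < LP * (2 + T * LQ)"
    using LP_pos T_pos consts_nonneg by (intro mult_pos_pos add_pos_nonneg) auto
  then have SP_gt_1: "1 < SP"
    unfolding SP_eq using T_pos consts_nonneg by (simp add: add_nonneg_pos)
  have SR_nonneg: "0 \<le> SR"
    unfolding SR_def using T_pos consts_nonneg by simp
  have "\<bar>reward_gap t\<bar> \<le> CR * sqrt (real CARD('u)) * sample_rate + SR * step_err * (\<Sum>i<t. SP ^ i)" for t
    using reward_gap_abs_le[of t] mult_left_mono[OF dist_mf_le SR_nonneg, of t] by (simp add: mult.assoc)
  then have "\<bar>vN K N \<gamma> pol P r x0 - vMF K N \<gamma> P r pol (emp K N x0)\<bar>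
      \<le> CR * sqrt (real CARD('u)) * sample_rate / (1 - \<gamma>)
        + SR * step_err / (SP - 1) * (1 / (1 - \<gamma> * SP) - 1 / (1 - \<gamma>))"
    by (rule discounted_sum_abs_le[OF \<gamma> SP_gt_1 contraction _ value_gap_sums[OF \<gamma>]])
  then show ?thesis
    unfolding step_err_def sample_rate_def by (simp add: mult_ac)
qed

end

theorem theorem5:
  fixes K :: nat and N :: "nat \<Rightarrow> nat"
    and MR LR LP LQ \<gamma> :: real
    and P :: "nat \<Rightarrow> 'x::finite \<Rightarrow> 'u::finite \<Rightarrow> ('x \<Rightarrow> nat \<Rightarrow> real) \<Rightarrow> ('u \<Rightarrow> nat \<Rightarrow> real) \<Rightarrow> 'x pmf"
    and r :: "nat \<Rightarrow> 'x \<Rightarrow> 'u \<Rightarrow> ('x \<Rightarrow> nat \<Rightarrow> real) \<Rightarrow> ('u \<Rightarrow> nat \<Rightarrow> real) \<Rightarrow> real"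
    and pol :: "nat \<Rightarrow> nat \<Rightarrow> 'x \<Rightarrow> ('x \<Rightarrow> nat \<Rightarrow> real) \<Rightarrow> 'u pmf"
    and x0 :: "nat \<times> nat \<Rightarrow> 'x"
  defines "thinv \<equiv> Max ((\<lambda>k. real (Npop K N) / real (N k)) ` {..<K})"
  defines "CR \<equiv> MR + LR * thinv"
  defines "CP \<equiv> 2 + LP * thinv"
  defines "SR \<equiv> MR * (1 + LQ * thinv) + LR * thinv * (2 + LQ * thinv)"
  defines "SP \<equiv> (1 + LQ * thinv) + LP * thinv * (2 + LQ * thinv)"
  assumes K_pos: "1 \<le> K"
    and N_pos: "\<forall>k<K. 1 \<le> N k"
    and consts_pos: "0 < MR" "0 < LR" "0 < LP" "0 < LQ"
    and gamma: "0 \<le> \<gamma>" "\<gamma> < 1"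
    and r_bound: "\<forall>k<K. \<forall>x u \<mu> \<nu>. \<mu> \<in> PK K \<longrightarrow> \<nu> \<in> PK K \<longrightarrow> \<bar>r k x u \<mu> \<nu>\<bar> \<le> MR"
    and r_lip: "\<forall>k<K. \<forall>x u \<mu>1 \<mu>2 \<nu>1 \<nu>2. \<mu>1 \<in> PK K \<longrightarrow> \<mu>2 \<in> PK K \<longrightarrow> \<nu>1 \<in> PK K \<longrightarrow> \<nu>2 \<in> PK K \<longrightarrow>
                 \<bar>r k x u \<mu>1 \<nu>1 - r k x u \<mu>2 \<nu>2\<bar> \<le> LR * (l1K K \<mu>1 \<mu>2 + l1K K \<nu>1 \<nu>2)"
    and P_lip: "\<forall>k<K. \<forall>x u \<mu>1 \<mu>2 \<nu>1 \<nu>2. \<mu>1 \<in> PK K \<longrightarrow> \<mu>2 \<in> PK K \<longrightarrow> \<nu>1 \<in> PK K \<longrightarrow> \<nu>2 \<in> PK K \<longrightarrow>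
                 l1pmf (P k x u \<mu>1 \<nu>1) (P k x u \<mu>2 \<nu>2) \<le> LP * (l1K K \<mu>1 \<mu>2 + l1K K \<nu>1 \<nu>2)"
    and pol_lip: "\<forall>t. \<forall>k<K. \<forall>x \<mu>1 \<mu>2. \<mu>1 \<in> PK K \<longrightarrow> \<mu>2 \<in> PK K \<longrightarrow>
                 l1pmf (pol t k x \<mu>1) (pol t k x \<mu>2) \<le> LQ * l1K K \<mu>1 \<mu>2"
    and contr: "\<gamma> * SP < 1"
  shows "\<bar>vN K N \<gamma> pol P r x0 - vMF K N \<gamma> P r pol (emp K N x0)\<bar>
    \<le> CR / (1 - \<gamma>) * sqrt (real CARD('u)) * (1 / real (Npop K N)) * (\<Sum>k<K. sqrt (real (N k)))
     + CP * (SR / (SP - 1)) * sqrt (real CARD('x) * real CARD('u))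
       * (1 / real (Npop K N)) * (\<Sum>k<K. sqrt (real (N k)))
       * (1 / (1 - \<gamma> * SP) - 1 / (1 - \<gamma>))"
proof -
  have T_bound: "\<forall>k<K. real (Npop K N) \<le> thinv * real (N k)"
  proof (intro allI impI)
    fix k
    assume k: "k < K"
    then have "real (Npop K N) / real (N k) \<le> thinv"
      unfolding thinv_def by (intro Max_ge) auto
    moreover have "0 < real (N k)"
      using N_pos k by force
    ultimately show "real (Npop K N) \<le> thinv * real (N k)"
      by (simp add: divide_le_eq)
  qed
  interpret M: mf_population K N MR LR LP LQ P r pol thinv x0
    using N_pos consts_pos r_bound r_lip P_lip pol_lip K_pos T_bound by unfold_locales auto
  have "M.CR = CR" "M.CP = CP" "M.SR = SR" "M.SP = SP"
    by (simp_all add: M.CR_def CR_def M.CP_def CP_def M.SR_def SR_def M.SP_def SP_def)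
  then show ?thesis
    using M.value_gap_le[OF gamma consts_pos(3)] contr by simp
qed

end
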